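(* Let $d$ be a thin dimension vector with $e=e(d)\ge 2$, $J=J(d)$, $K=\operatorname{supp} d\setminus J$, $T=\Delta(J)$, $S=\Delta(K)$. Let $A$ be the set of pairs $(i,j)$ consisting of: all $(i,j)$ with $i<j$ consecutive elements of $K$; all $(i,j)$ with $i<j$ consecutive elements of $J$ except the pairs $(b_m-1,b_m+2)$ for $2\le m\le e$; and the pairs $(b_m,b_m+2)$ for $1\le m\le e$. For $(t_2,\dots,t_e)\in(k^\times)^{e-1}$ put $$\mathcal F(t_2,\dots,t_e)=\sum_{(i,j)\in A}f_{i,j}+\sum_{m=2}^{e}t_m f_{b_m-1,b_m+2}\in\mathfrak n.$$ Then the $\mathcal A_{t,1}$-module $M(\mathcal F(t_2,\dots,t_e))$ fits into a non-split short exact sequence $0\to S\to M(\mathcal F(t_2,\dots,t_e))\to T\to 0$.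
   Context: Let $k$ be an algebraically closed field. A thin dimension vector is $d=(d_1,\dots,d_t)\in\{0,1\}^t$ with $d_1=d_t=1$ and no two consecutive entries equal to $0$; $\operatorname{supp} d=\{i: d_i=1\}$ and $n=\#\operatorname{supp} d$. Write its entries as maximal strings of consecutive ones of lengths $a_0,a_1,\dots,a_{r+1}$ (in order, separated by single zeros); the strings of lengths $a_1,\dots,a_r$ are called internal, and $e(d)=\#\{1\le i\le r: a_i\text{ even}\}$. Let $b_1<\dots<b_{e(d)}$ be the positions of the last entries of the internal strings of even length. Define $J(d)$ as the set of $j\in\{1,\dots,t\}$ such that either $j\le b_1-1$ and $j\equiv b_1-1\pmod 2$; or $b_i+2\le j\le b_{i+1}-1$ and $j\equiv b_i \pmod 2$ for some $1\le i<e(d)$; or $j\ge b_{e(d)}+2$ and $j\equiv b_{e(d)}\pmod 2$. Label a basis of $k^n$ as $\{f_j: j\in\operatorname{supp} d\}$, with $f_j$ the $m$-th standard basis vector if $j$ is the $m$-th smallest element of $\operatorname{supp} d$; $f_{i,j}$ sends $f_j\mapsto f_i$ and other $f_{j'}$ to $0$. Let $V_i=\mathrm{span}\{f_j: j\in\operatorname{supp} d, j\le i\}$ ($V_i=0$ for $i\le 0$) and $\mathfrak n=\{x\in\mathrm{End}(k^n): x(V_i)\subseteq V_{i-2}\ \forall i\}$. $\mathcal A_{t,1}$ is the quotient of the path algebra over $k$ of the quiver with vertices $1,\dots,t$, arrows $\alpha_i:i\to i+1$ ($1\le i\le t-1$) and $\beta_j:j+2\to j$ ($1\le j\le t-2$),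 by the relations $\beta_1\alpha_2=0$ and $\beta_{i+1}\alpha_{i+2}=\alpha_i\beta_i$ for $1\le i\le t-3$ (compositions right to left); modules are representations satisfying these relations. For $x\in\mathfrak n$, $M(x)$ is the module with $M(x)_i=V_i$, $\alpha_i$ the inclusion $V_i\hookrightarrow V_{i+1}$, and $\beta_j=x|_{V_{j+2}}:V_{j+2}\to V_j$. A subset $J\subseteq\{1,\dots,t\}$ is standard if $j\in J\Rightarrow j+1\notin J$. For nonempty standard $J$, $\Delta(J)_i=k^{l}$ with $l=\#\{j\in J: j\le i\}$ and basis $e_1,\dots,e_l$; $\alpha_i$ is the inclusion $e_h\mapsto e_h$, and $\beta_j(e_h)=e_{h-1}$ for $h\ge 2$, $\beta_j(e_1)=0$. *)

theory Defs
  imports "HOL-Computational_Algebra.Polynomial" "Jordan_Normal_Form.Matrix"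
begin

definition alg_closed :: "'a::field itself \<Rightarrow> bool" where
  "alg_closed _ \<longleftrightarrow> (\<forall>p::'a poly. degree p \<ge> 1 \<longrightarrow> (\<exists>x. poly p x = 0))"

text \<open>A dimension vector d = (d_1,...,d_t) is encoded by t and a function d on nat;
  only the values d 1, ..., d t matter.\<close>

definition thin :: "nat \<Rightarrow> (nat \<Rightarrow> nat) \<Rightarrow> bool" where
  "thin t d \<longleftrightarrow> t \<ge> 1 \<and> (\<forall>i\<in>{1..t}. d i \<in> {0,1}) \<and> d 1 = 1 \<and> d t = 1 \<and>
     (\<forall>i. 1 \<le> i \<and> i < t \<longrightarrow> d i = 1 \<or> d (Suc i) = 1)"

definition supp :: "nat \<Rightarrow> (nat \<Rightarrow> nat) \<Rightarrow> nat set" where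
  "supp t d = {i\<in>{1..t}. d i = 1}"

text \<open>b is the last entry of an internal string (maximal string of ones not containing
  position 1 or t) of even length.\<close>

definition even_internal_end :: "nat \<Rightarrow> (nat \<Rightarrow> nat) \<Rightarrow> nat \<Rightarrow> bool" where
  "even_internal_end t d b \<longleftrightarrow> b \<in> supp t d \<and> b < t \<and> d (Suc b) = 0 \<and>
     (\<exists>s. 1 < s \<and> s \<le> b \<and> d (s - 1) = 0 \<and> (\<forall>j\<in>{s..b}. d j = 1) \<and> even (b - s + 1))"

definition bset :: "nat \<Rightarrow> (nat \<Rightarrow> nat) \<Rightarrow> nat set" where
  "bset t d = {b. even_internal_end t d b}"

definition e_of :: "nat \<Rightarrow> (nat \<Rightarrow> nat) \<Rightarrow> nat" where
  "e_of t d = card (bset t d)"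

text \<open>b_of t d m = b_m (1-based: b_1 < ... < b_e).\<close>
definition b_of :: "nat \<Rightarrow> (nat \<Rightarrow> nat) \<Rightarrow> nat \<Rightarrow> nat" where
  "b_of t d m = sorted_list_of_set (bset t d) ! (m - 1)"

definition J_of :: "nat \<Rightarrow> (nat \<Rightarrow> nat) \<Rightarrow> nat set" where
  "J_of t d = {j\<in>{1..t}.
      (j \<le> b_of t d 1 - 1 \<and> j mod 2 = (b_of t d 1 - 1) mod 2)
    \<or> (\<exists>i. 1 \<le> i \<and> i < e_of t d \<and> b_of t d i + 2 \<le> j \<and> j \<le> b_of t d (Suc i) - 1
           \<and> j mod 2 = b_of t d i mod 2)
    \<or> (j \<ge> b_of t d (e_of t d) + 2 \<and> j mod 2 = b_of t d (e_of t d) mod 2)}"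

text \<open>A representation: dimension of the space at each vertex (spaces are k^dim),
  matrices for alpha_i : i \<rightarrow> i+1 and beta_j : j+2 \<rightarrow> j.\<close>

record 'a rep =
  rdim :: "nat \<Rightarrow> nat"
  ralpha :: "nat \<Rightarrow> 'a mat"
  rbeta :: "nat \<Rightarrow> 'a mat"

definition incl_mat :: "nat \<Rightarrow> nat \<Rightarrow> 'a::field mat" where
  "incl_mat m n = mat m n (\<lambda>(r,c). if r = c then 1 else 0)"

text \<open>Delta(J): dimension l_i = #{j in J. j \<le> i}, alpha the inclusion e_h \<mapsto> e_h,
  beta e_h \<mapsto> e_{h-1} (and e_1 \<mapsto> 0); coordinates are 0-based.\<close>

definition Delta :: "nat set \<Rightarrow> 'a::field rep" where
  "Delta J = (let l = (\<lambda>i. card {j\<in>J. j \<le> i}) in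
     \<lparr> rdim = l,
       ralpha = (\<lambda>i. incl_mat (l (Suc i)) (l i)),
       rbeta = (\<lambda>j. mat (l j) (l (j+2)) (\<lambda>(r,c). if c = Suc r then 1 else 0)) \<rparr>)"

text \<open>Basis f_j (j in supp d) of k^n: f_j is the standard basis vector with 0-based
  index idx j = #{j' in supp. j' < j}. Thus V_i is spanned by the first vdim i coordinates.\<close>

definition idx :: "nat \<Rightarrow> (nat \<Rightarrow> nat) \<Rightarrow> nat \<Rightarrow> nat" where
  "idx t d j = card {j'\<in>supp t d. j' < j}"

definition vdim :: "nat \<Rightarrow> (nat \<Rightarrow> nat) \<Rightarrow> nat \<Rightarrow> nat" where
  "vdim t d i = card {j\<in>supp t d. j \<le> i}"

definition nvec :: "nat \<Rightarrow> (nat \<Rightarrow> nat) \<Rightarrow> nat" where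
  "nvec t d = card (supp t d)"

text \<open>v \<in> V_i (V_i = 0 for i \<le> 0; the nat subtraction i - 2 truncates to 0).\<close>
definition inV :: "nat \<Rightarrow> (nat \<Rightarrow> nat) \<Rightarrow> nat \<Rightarrow> 'a::field vec \<Rightarrow> bool" where
  "inV t d i v \<longleftrightarrow> v \<in> carrier_vec (nvec t d) \<and> (\<forall>r<nvec t d. vdim t d i \<le> r \<longrightarrow> v $ r = 0)"

definition nilp :: "nat \<Rightarrow> (nat \<Rightarrow> nat) \<Rightarrow> 'a::field mat set" where
  "nilp t d = {x \<in> carrier_mat (nvec t d) (nvec t d).
      \<forall>i v. inV t d i v \<longrightarrow> inV t d (i - 2) (x *\<^sub>v v)}"

definition fmat :: "nat \<Rightarrow> (nat \<Rightarrow> nat) \<Rightarrow> nat \<Rightarrow> nat \<Rightarrow> 'a::field mat" where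
  "fmat t d i j = mat (nvec t d) (nvec t d)
     (\<lambda>(r,c). if r = idx t d i \<and> c = idx t d j then 1 else 0)"

text \<open>M(x): M_i = V_i, alpha the inclusions, beta_j = x restricted to V_{j+2} (into V_j).\<close>
definition Mx :: "nat \<Rightarrow> (nat \<Rightarrow> nat) \<Rightarrow> 'a::field mat \<Rightarrow> 'a rep" where
  "Mx t d x = (let l = vdim t d in
     \<lparr> rdim = l,
       ralpha = (\<lambda>i. incl_mat (l (Suc i)) (l i)),
       rbeta = (\<lambda>j. mat (l j) (l (j+2)) (\<lambda>(r,c). x $$ (r,c))) \<rparr>)"

definition is_hom :: "nat \<Rightarrow> 'a::field rep \<Rightarrow> 'a rep \<Rightarrow> (nat \<Rightarrow> 'a mat) \<Rightarrow> bool" where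
  "is_hom t R R' f \<longleftrightarrow>
     (\<forall>i\<in>{1..t}. f i \<in> carrier_mat (rdim R' i) (rdim R i)) \<and>
     (\<forall>i. 1 \<le> i \<and> i + 1 \<le> t \<longrightarrow> f (Suc i) * ralpha R i = ralpha R' i * f i) \<and>
     (\<forall>j. 1 \<le> j \<and> j + 2 \<le> t \<longrightarrow> f j * rbeta R j = rbeta R' j * f (j + 2))"

definition short_exact :: "nat \<Rightarrow> 'a::field rep \<Rightarrow> 'a rep \<Rightarrow> 'a rep \<Rightarrow>
    (nat \<Rightarrow> 'a mat) \<Rightarrow> (nat \<Rightarrow> 'a mat) \<Rightarrow> bool" where
  "short_exact t S M T f g \<longleftrightarrow> is_hom t S M f \<and> is_hom t M T g \<and>
     (\<forall>i\<in>{1..t}.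
        (\<forall>u\<in>carrier_vec (rdim S i). f i *\<^sub>v u = 0\<^sub>v (rdim M i) \<longrightarrow> u = 0\<^sub>v (rdim S i)) \<and>
        (\<forall>w\<in>carrier_vec (rdim T i). \<exists>v\<in>carrier_vec (rdim M i). g i *\<^sub>v v = w) \<and>
        (\<forall>v\<in>carrier_vec (rdim M i). g i *\<^sub>v v = 0\<^sub>v (rdim T i) \<longleftrightarrow>
            (\<exists>u\<in>carrier_vec (rdim S i). v = f i *\<^sub>v u)))"

definition splits :: "nat \<Rightarrow> 'a::field rep \<Rightarrow> 'a rep \<Rightarrow> (nat \<Rightarrow> 'a mat) \<Rightarrow> bool" where
  "splits t M T g \<longleftrightarrow> (\<exists>s. is_hom t T M s \<and> (\<forall>i\<in>{1..t}. g i * s i = 1\<^sub>m (rdim T i)))"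

definition consec :: "nat set \<Rightarrow> (nat \<times> nat) set" where
  "consec X = {(i,j). i \<in> X \<and> j \<in> X \<and> i < j \<and> \<not> (\<exists>k\<in>X. i < k \<and> k < j)}"

definition A_set :: "nat \<Rightarrow> (nat \<Rightarrow> nat) \<Rightarrow> (nat \<times> nat) set" where
  "A_set t d = (let J = J_of t d; K = supp t d - J; e = e_of t d; b = b_of t d in
     consec K
     \<union> (consec J - {(b m - 1, b m + 2) | m. 2 \<le> m \<and> m \<le> e})
     \<union> {(b m, b m + 2) | m. 1 \<le> m \<and> m \<le> e})"

definition Fmat :: "nat \<Rightarrow> (nat \<Rightarrow> nat) \<Rightarrow> (nat \<Rightarrow> 'a::field) \<Rightarrow> 'a mat" where
  "Fmat t d tt = mat (nvec t d) (nvec t d) (\<lambda>rc.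
      (\<Sum>p\<in>A_set t d. fmat t d (fst p) (snd p) $$ rc)
    + (\<Sum>m\<in>{2..e_of t d}. tt m * fmat t d (b_of t d m - 1) (b_of t d m + 2) $$ rc))"

end

theory Submission
  imports Defs
begin

(* Write S = supp d and K = S - J. Membership of j in J is decided by the parity of j plus the
   number of b_m below j; this works because that quantity has constant parity over the zeros of
   d, a maximal string of ones between two zeros having odd length unless it ends at some b_m.
   Hence no two consecutive integers lie in J, nor in K, and F maps f_p, for p in K, to f of the
   predecessor of p in K. So the f_k with k in K span a submodule isomorphic to Delta(K), and the
   quotient is Delta(J), the basis vector f_j (j in J) going to a multiple of the corresponding
   generator; the scalars are products of entries of F along J, nonzero because the t_m are.
   The sequence does not split because of the arrow (b_1, b_1 + 2) of F: a section would have to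
   give the generator of Delta(J) at b_1 + 2 a nonzero f_(b_1+2)-coordinate, but compatibility
   with beta at b_1 forces this coordinate to vanish. *)

section \<open>Ranks in finite sets of natural numbers\<close>

definition rank :: "nat set \<Rightarrow> nat \<Rightarrow> nat" where
  "rank X a = card {x\<in>X. x < a}"

definition count_le :: "nat set \<Rightarrow> nat \<Rightarrow> nat" where
  "count_le X i = card {x\<in>X. x \<le> i}"

definition elem_of_rank :: "nat set \<Rightarrow> nat \<Rightarrow> nat" where
  "elem_of_rank X c = inv_into X (rank X) c"

lemma count_le_eq_rank_Suc: "count_le X i = rank X (Suc i)"
  unfolding count_le_def rank_def less_Suc_eq_le ..

lemma rank_mono: "finite X \<Longrightarrow> a \<le> a' \<Longrightarrow> rank X a \<le> rank X a'"
  unfolding rank_def by (intro card_mono) auto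

lemma rank_le_card: "finite X \<Longrightarrow> rank X a \<le> card X"
  unfolding rank_def by (intro card_mono) auto

lemma rank_Suc: "finite X \<Longrightarrow> rank X (Suc a) = (if a \<in> X then Suc (rank X a) else rank X a)"
proof -
  assume "finite X"
  have "{x\<in>X. x < Suc a} = (if a \<in> X then insert a {x\<in>X. x < a} else {x\<in>X. x < a})"
    by (auto simp: less_Suc_eq)
  then show ?thesis
    unfolding rank_def using \<open>finite X\<close> by simp
qed

lemma rank_less_rank_iff:
  assumes "finite X" "a \<in> X"
  shows "rank X a < rank X j \<longleftrightarrow> a < j"
proof
  assume "a < j"
  then have "rank X (Suc a) \<le> rank X j"
    by (intro rank_mono assms) simp
  then show "rank X a < rank X j"
    using rank_Suc[OF assms(1)] assms(2) by simp
next
  assume "rank X a < rank X j"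
  then show "a < j"
    using rank_mono[OF assms(1), of j a] by linarith
qed

lemma rank_less_card: "finite X \<Longrightarrow> a \<in> X \<Longrightarrow> rank X a < card X"
  unfolding rank_def by (intro psubset_card_mono) auto

lemma inj_on_rank: "finite X \<Longrightarrow> inj_on (rank X) X"
  by (rule inj_onI) (metis rank_less_rank_iff less_irrefl linorder_neqE_nat)

lemma rank_image: "finite X \<Longrightarrow> rank X ` X = {..<card X}"
  by (intro card_subset_eq) (auto simp: card_image inj_on_rank rank_less_card)

lemma
  assumes "finite X" "c < card X"
  shows elem_of_rank_in: "elem_of_rank X c \<in> X"
    and rank_elem_of_rank: "rank X (elem_of_rank X c) = c"
proof -
  have "c \<in> rank X ` X"
    using rank_image[OF assms(1)] assms(2) by simp
  then show "elem_of_rank X c \<in> X" "rank X (elem_of_rank X c) = c"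
    unfolding elem_of_rank_def by (auto intro: inv_into_into f_inv_into_f)
qed

lemma elem_of_rank_rank: "finite X \<Longrightarrow> a \<in> X \<Longrightarrow> elem_of_rank X (rank X a) = a"
  unfolding elem_of_rank_def by (rule inv_into_f_f[OF inj_on_rank])

lemma elem_of_rank_less_iff:
  "finite X \<Longrightarrow> c < card X \<Longrightarrow> elem_of_rank X c < j \<longleftrightarrow> c < rank X j"
  using rank_less_rank_iff[OF _ elem_of_rank_in] rank_elem_of_rank by metis

lemma rank_sorted_nth:
  assumes "sorted_wrt (<) xs" "i < length xs"
  shows "rank (set xs) (xs ! i) = i"
proof -
  have "{x\<in>set xs. x < xs ! i} = set (take i xs)"
  proof (intro equalityI subsetI)
    fix x assume "x \<in> {x\<in>set xs. x < xs ! i}"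
    then obtain k where k: "k < length xs" "x = xs ! k" "xs ! k < xs ! i"
      by (auto simp: in_set_conv_nth)
    then have "k < i"
      using sorted_wrt_nth_less[OF assms(1), of i k] assms(2) by (metis less_asym linorder_neqE_nat)
    then show "x \<in> set (take i xs)"
      using k by (auto simp: in_set_conv_nth)
  next
    fix x assume "x \<in> set (take i xs)"
    then obtain k where "k < i" "x = xs ! k"
      using assms(2) by (auto simp: in_set_conv_nth)
    then show "x \<in> {x\<in>set xs. x < xs ! i}"
      using sorted_wrt_nth_less[OF assms(1)] assms(2) by auto
  qed
  then show ?thesis
    unfolding rank_def using assms
    by (simp add: distinct_card strict_sorted_iff)
qed

lemma rank_less_count_le_iff: "finite X \<Longrightarrow> a \<in> X \<Longrightarrow> rank X a < count_le X i \<longleftrightarrow> a \<le> i"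
  unfolding count_le_eq_rank_Suc by (simp add: rank_less_rank_iff less_Suc_eq_le)

lemma count_le_le_card: "finite X \<Longrightarrow> count_le X i \<le> card X"
  unfolding count_le_eq_rank_Suc by (rule rank_le_card)

lemma count_le_mono: "finite X \<Longrightarrow> i \<le> i' \<Longrightarrow> count_le X i \<le> count_le X i'"
  unfolding count_le_eq_rank_Suc by (simp add: rank_mono)

lemma
  assumes "finite X" "c < count_le X i"
  shows elem_of_rank_in_count_le: "elem_of_rank X c \<in> X"
    and rank_elem_of_rank_count_le: "rank X (elem_of_rank X c) = c"
    and elem_of_rank_le: "elem_of_rank X c \<le> i"
proof -
  have "c < card X"
    using assms count_le_le_card by (metis order.strict_trans2)
  then show "elem_of_rank X c \<in> X" "rank X (elem_of_rank X c) = c"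
    using elem_of_rank_in rank_elem_of_rank assms(1) by auto
  then show "elem_of_rank X c \<le> i"
    using rank_less_count_le_iff assms by metis
qed

lemma consecD: "(a, p) \<in> consec X \<Longrightarrow> a \<in> X \<and> p \<in> X \<and> a < p"
  unfolding consec_def by auto

lemma consec_iff_rank:
  assumes "finite X"
  shows "(a, p) \<in> consec X \<longleftrightarrow> a \<in> X \<and> p \<in> X \<and> rank X p = Suc (rank X a)"
proof
  assume ap: "(a, p) \<in> consec X"
  then have "{x\<in>X. x < p} = {x\<in>X. x < Suc a}"
    unfolding consec_def by (auto simp: less_Suc_eq)
  then show "a \<in> X \<and> p \<in> X \<and> rank X p = Suc (rank X a)"
    using consecD[OF ap] rank_Suc[OF assms, of a] unfolding rank_def by simp
next
  assume ap: "a \<in> X \<and> p \<in> X \<and> rank X p = Suc (rank X a)"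
  have "\<not> (a < k \<and> k < p)" if "k \<in> X" for k
    using rank_less_rank_iff[OF assms] ap that by (metis Suc_lessI less_asym)
  moreover have "a < p"
    using rank_less_rank_iff[OF assms] ap by (metis lessI)
  ultimately show "(a, p) \<in> consec X"
    unfolding consec_def using ap by auto
qed

lemma consec_add_2_le: "(a, p) \<in> consec X \<Longrightarrow> Suc a \<notin> X \<Longrightarrow> a + 2 \<le> p"
  by (drule consecD) (metis Suc_lessI add_2_eq_Suc' less_eq_Suc_le)

section \<open>Representations in coordinates\<close>

lemma sum_lessThan_single:
  assumes "\<And>k. k < (n::nat) \<Longrightarrow> k \<noteq> a \<Longrightarrow> f k = 0"
  shows "(\<Sum>k<n. f k) = (if a < n then f a else 0)"
proof -
  have "(\<Sum>k<n. f k) = (\<Sum>k<n. if k = a then f k else 0)"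
    using assms by (intro sum.cong) auto
  also have "\<dots> = (if a < n then f a else 0)"
    by (subst sum.delta) auto
  finally show ?thesis .
qed

lemma index_mult_mat_sum:
  assumes "A \<in> carrier_mat nr n" "B \<in> carrier_mat n nc" "i < nr" "j < nc"
  shows "(A * B) $$ (i, j) = (\<Sum>k<n. A $$ (i, k) * B $$ (k, j))"
  using assms by (auto simp: scalar_prod_def lessThan_atLeast0 intro!: sum.cong)

lemma index_mult_mat_vec_sum:
  assumes "A \<in> carrier_mat nr n" "v \<in> carrier_vec n" "i < nr"
  shows "(A *\<^sub>v v) $ i = (\<Sum>k<n. A $$ (i, k) * v $ k)"
  using assms by (auto simp: scalar_prod_def lessThan_atLeast0 intro!: sum.cong)

lemma incl_mat_carrier: "incl_mat m n \<in> carrier_mat m n"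
  unfolding incl_mat_def by simp

lemma dim_incl_mat [simp]: "dim_row (incl_mat m n) = m" "dim_col (incl_mat m n) = n"
  unfolding incl_mat_def by simp_all

lemma index_mult_incl_mat:
  assumes "A \<in> carrier_mat m n'" "n \<le> n'" "r < m" "c < n"
  shows "(A * incl_mat n' n) $$ (r, c) = A $$ (r, c)"
proof -
  have "(A * incl_mat n' n) $$ (r, c) = (\<Sum>k<n'. A $$ (r, k) * incl_mat n' n $$ (k, c))"
    by (rule index_mult_mat_sum[OF assms(1) incl_mat_carrier assms(3,4)])
  also have "\<dots> = A $$ (r, c)"
    using assms by (subst sum_lessThan_single[of _ c]) (auto simp: incl_mat_def)
  finally show ?thesis .
qed

lemma index_incl_mat_mult:
  assumes "B \<in> carrier_mat n nc" "r < m" "c < nc"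
  shows "(incl_mat m n * B) $$ (r, c) = (if r < n then B $$ (r, c) else 0)"
proof -
  have "(incl_mat m n * B) $$ (r, c) = (\<Sum>k<n. incl_mat m n $$ (r, k) * B $$ (k, c))"
    by (rule index_mult_mat_sum[OF incl_mat_carrier assms])
  also have "\<dots> = (if r < n then B $$ (r, c) else 0)"
    using assms by (subst sum_lessThan_single[of _ r]) (auto simp: incl_mat_def)
  finally show ?thesis .
qed

definition shift_mat :: "nat \<Rightarrow> nat \<Rightarrow> 'a::field mat" where
  "shift_mat l l' = mat l l' (\<lambda>(r, c). if c = Suc r then 1 else 0)"

lemma shift_mat_carrier: "shift_mat l l' \<in> carrier_mat l l'"
  unfolding shift_mat_def by simp

lemma dim_shift_mat [simp]: "dim_row (shift_mat l l') = l" "dim_col (shift_mat l l') = l'"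
  unfolding shift_mat_def by simp_all

lemma index_mult_shift_mat:
  assumes "A \<in> carrier_mat m l" "r < m" "c < l'"
  shows "(A * shift_mat l l') $$ (r, c) = (if 1 \<le> c \<and> c - 1 < l then A $$ (r, c - 1) else 0)"
proof -
  have "(A * shift_mat l l') $$ (r, c) = (\<Sum>k<l. A $$ (r, k) * shift_mat l l' $$ (k, c))"
    by (rule index_mult_mat_sum[OF assms(1) shift_mat_carrier assms(2,3)])
  also have "\<dots> = (if 1 \<le> c \<and> c - 1 < l then A $$ (r, c - 1) else 0)"
    using assms by (subst sum_lessThan_single[of _ "c - 1"]) (auto simp: shift_mat_def)
  finally show ?thesis .
qed

lemma index_shift_mat_mult:
  assumes "B \<in> carrier_mat l' nc" "r < l" "c < nc"
  shows "(shift_mat l l' * B) $$ (r, c) = (if Suc r < l' then B $$ (Suc r, c) else 0)"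
proof -
  have "(shift_mat l l' * B) $$ (r, c) = (\<Sum>k<l'. shift_mat l l' $$ (r, k) * B $$ (k, c))"
    by (rule index_mult_mat_sum[OF shift_mat_carrier assms])
  also have "\<dots> = (if Suc r < l' then B $$ (Suc r, c) else 0)"
    using assms by (subst sum_lessThan_single[of _ "Suc r"]) (auto simp: shift_mat_def)
  finally show ?thesis .
qed

lemma Delta_simps:
  "rdim (Delta X) = count_le X"
  "ralpha (Delta X) i = incl_mat (count_le X (Suc i)) (count_le X i)"
  "rbeta (Delta X) j = shift_mat (count_le X j) (count_le X (j + 2))"
  unfolding Delta_def Let_def count_le_def shift_mat_def by auto

lemma idx_eq_rank: "idx t d = rank (supp t d)"
  unfolding idx_def rank_def by simp

lemma vdim_eq_count_le: "vdim t d = count_le (supp t d)"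
  unfolding vdim_def count_le_def by simp

lemma nvec_eq_card: "nvec t d = card (supp t d)"
  unfolding nvec_def by simp

lemma Mx_simps:
  "rdim (Mx t d x) = count_le (supp t d)"
  "ralpha (Mx t d x) i = incl_mat (count_le (supp t d) (Suc i)) (count_le (supp t d) i)"
  "rbeta (Mx t d x) j = mat (count_le (supp t d) j) (count_le (supp t d) (j + 2)) (\<lambda>(r, c). x $$ (r, c))"
  unfolding Mx_def Let_def vdim_eq_count_le by simp_all

text \<open>Compatibility with the inclusions alpha: a morphism out of Delta(X) maps a basis
  vector already present at vertex i into V_i, also at vertex i + 1.\<close>

lemma hom_from_Delta_vanishes:
  assumes "is_hom t (Delta X) (Mx t d x) s" "1 \<le> i" "Suc i \<le> t"
    and "count_le (supp t d) i \<le> r" "r < count_le (supp t d) (Suc i)" "c < count_le X i"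
  shows "s (Suc i) $$ (r, c) = 0"
proof -
  have s: "s i \<in> carrier_mat (count_le (supp t d) i) (count_le X i)"
      "s (Suc i) \<in> carrier_mat (count_le (supp t d) (Suc i)) (count_le X (Suc i))"
    using assms(1-3) unfolding is_hom_def Delta_simps Mx_simps by auto
  have "s (Suc i) * incl_mat (count_le X (Suc i)) (count_le X i)
      = incl_mat (count_le (supp t d) (Suc i)) (count_le (supp t d) i) * s i"
    using assms(1-3) unfolding is_hom_def Delta_simps Mx_simps by simp
  moreover have "count_le X i \<le> count_le X (Suc i)"
    unfolding count_le_def by (intro card_mono) auto
  ultimately show ?thesis
    using index_mult_incl_mat[OF s(2) _ assms(5,6)] index_incl_mat_mult[OF s(1) assms(5,6)] assms(4)
    by simp
qed

section \<open>Thin dimension vectors\<close>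

lemma mod_2_eq_iff_even: "(a::nat) mod 2 = c mod 2 \<longleftrightarrow> (even a \<longleftrightarrow> even c)"
  by presburger

locale thin_vector =
  fixes t :: nat and d :: "nat \<Rightarrow> nat"
  assumes thin: "thin t d"
begin

abbreviation "S \<equiv> supp t d"
abbreviation "B \<equiv> bset t d"
abbreviation "e \<equiv> e_of t d"
abbreviation "b \<equiv> b_of t d"
abbreviation "J \<equiv> J_of t d"

lemma mem_supp_iff: "i \<in> S \<longleftrightarrow> i \<in> {1..t} \<and> d i = 1"
  unfolding supp_def by simp

lemma finite_supp: "finite S"
  unfolding supp_def by simp

lemma no_adjacent_zeros: "i \<in> {1..t} - S \<Longrightarrow> Suc i \<in> {1..t} \<Longrightarrow> Suc i \<in> S"
  using thin unfolding thin_def supp_def by auto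

lemma zero_iff: "i \<in> {1..t} \<Longrightarrow> i \<notin> S \<longleftrightarrow> d i = 0"
  using thin unfolding thin_def supp_def by auto

lemma t_in_supp: "t \<in> S"
  using thin unfolding thin_def supp_def by simp

lemma bset_props:
  assumes "bb \<in> B"
  shows "bb \<in> S" "Suc bb \<in> {1..t} - S" "bb - 1 \<in> S" "3 \<le> bb" "bb + 2 \<le> t"
proof -
  obtain s where s: "1 < s" "s \<le> bb" "d (s - 1) = 0" "\<forall>j\<in>{s..bb}. d j = 1" "even (bb - s + 1)"
    using assms unfolding bset_def even_internal_end_def by auto
  have bb: "bb \<in> S" "bb < t" "d (Suc bb) = 0"
    using assms unfolding bset_def even_internal_end_def by auto
  then show "bb \<in> S" by simp
  show "Suc bb \<in> {1..t} - S"
    using bb thin unfolding thin_def supp_def by (auto simp: Suc_le_eq)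
  have "s < bb"
    using s(2,5) by (cases "s = bb") auto
  then have "d (bb - 1) = 1"
    using s(4) by simp
  then show "bb - 1 \<in> S"
    using s(1) \<open>s < bb\<close> \<open>bb < t\<close> unfolding supp_def by (simp; arith)
  show "3 \<le> bb"
    using s(1) \<open>s < bb\<close> by simp
  show "bb + 2 \<le> t"
    using bb t_in_supp unfolding supp_def by (cases "Suc bb = t") auto
qed

lemma finite_bset: "finite B"
  using bset_props(1) finite_supp by (meson finite_subset subsetI)

lemma zero_before_bset:
  assumes "bb \<in> B"
  obtains z where "z \<in> {1..t} - S" "z < bb" "rank B z = rank B bb" "even z \<longleftrightarrow> even bb"
proof -
  obtain s where s: "1 < s" "s \<le> bb" "d (s - 1) = 0" "\<forall>j\<in>{s..bb}. d j = 1" "even (bb - s + 1)"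
    using assms unfolding bset_def even_internal_end_def by auto
  have "bb < t"
    using assms unfolding bset_def even_internal_end_def by auto
  have notin_B: "x \<notin> B" if "s - 1 \<le> x" "x < bb" for x
  proof
    assume "x \<in> B"
    then have "Suc x \<notin> S" "x \<in> S"
      using bset_props by auto
    then show False
      using that s \<open>bb < t\<close> unfolding supp_def by (cases "x = s - 1") auto
  qed
  then have "{x\<in>B. x < s - 1} = {x\<in>B. x < bb}"
    using notin_B s(1,2) by (auto simp: not_le) (meson not_less)
  then have "rank B (s - 1) = rank B bb"
    unfolding rank_def by simp
  moreover have "even (s - 1) \<longleftrightarrow> even bb"
    using s(1,2,5) by (simp add: Suc_diff_le[symmetric] even_diff_nat)
  moreover have "s - 1 \<in> {1..t} - S"
    using s \<open>bb < t\<close> unfolding supp_def by auto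
  ultimately show thesis
    using that s by simp
qed

text \<open>The string of ones strictly between y and z is internal, so by the definition of B
  its length is odd.\<close>

lemma zeros_around_ones_parity:
  assumes "y \<in> {1..t} - S" "z \<in> {1..t} - S" "y < z"
    and ones: "\<And>j. y < j \<Longrightarrow> j < z \<Longrightarrow> j \<in> S"
    and "z - 1 \<notin> B"
  shows "even y \<longleftrightarrow> even z"
proof (rule ccontr)
  assume parity: "\<not> (even y \<longleftrightarrow> even z)"
  have "Suc y \<noteq> z"
    using no_adjacent_zeros[of y] assms(1,2) by auto
  then have yz: "Suc y < z"
    using assms(3) by simp
  have "even_internal_end t d (z - 1)"
    unfolding even_internal_end_def
  proof (intro conjI exI[of _ "Suc y"])
    show "z - 1 \<in> S" "\<forall>j\<in>{Suc y..z - 1}. d j = 1"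
      using ones yz unfolding supp_def by auto
    show "z - 1 < t" "d (Suc (z - 1)) = 0" "d (Suc y - 1) = 0"
      using assms(1,2) yz zero_iff by auto
    show "1 < Suc y" "Suc y \<le> z - 1"
      using assms(1) yz by auto
    show "even (z - 1 - Suc y + 1)"
      using parity yz by (simp add: even_diff_nat)
  qed
  then show False
    using assms(5) unfolding bset_def by simp
qed

lemma last_zero_below:
  assumes "z \<in> {1..t} - S" "z < z'" "z' \<le> t"
  obtains y where "y \<in> {1..t} - S" "z \<le> y" "y < z'" "\<And>j. y < j \<Longrightarrow> j < z' \<Longrightarrow> j \<in> S"
proof -
  define Y where "Y = {y\<in>{1..t} - S. z \<le> y \<and> y < z'}"
  have "finite Y" "z \<in> Y"
    using assms unfolding Y_def by auto
  then have y: "Max Y \<in> Y" "\<And>y'. y' \<in> Y \<Longrightarrow> y' \<le> Max Y"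
    by (auto intro: Max_in)
  have ones: "j \<in> S" if "Max Y < j" "j < z'" for j
  proof (rule ccontr)
    assume "j \<notin> S"
    then have "j \<in> Y"
      using that y(1) assms(3) unfolding Y_def by auto
    then show False
      using y(2) that(1) by fastforce
  qed
  have "Max Y \<in> {1..t} - S" "z \<le> Max Y" "Max Y < z'"
    using y(1) unfolding Y_def by auto
  then show thesis
    using ones by (rule that)
qed

lemma zeros_same_rank_parity_le:
  assumes "z \<in> {1..t} - S" "z' \<in> {1..t} - S" "z \<le> z'" "rank B z = rank B z'"
  shows "even z \<longleftrightarrow> even z'"
  using assms
proof (induction z' arbitrary: z rule: less_induct)
  case (less z')
  show ?case
  proof (cases "z = z'")
    case False
    then have "z < z'" "z' \<le> t"
      using less.prems(2,3) by auto
    then obtain y where y: "y \<in> {1..t} - S" "z \<le> y" "y < z'"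
      and ones: "\<And>j. y < j \<Longrightarrow> j < z' \<Longrightarrow> j \<in> S"
      using last_zero_below[OF less.prems(1)] by blast
    have rank_y: "rank B z = rank B y" "rank B y = rank B z'"
      using rank_mono[OF finite_bset, of z y] rank_mono[OF finite_bset, of y z'] y(2,3)
        less.prems(4) by linarith+
    have "z' - 1 \<notin> B"
    proof
      assume "z' - 1 \<in> B"
      then have "rank B z' = Suc (rank B (z' - 1))"
        using rank_Suc[OF finite_bset, of "z' - 1"] y by simp
      moreover have "rank B y \<le> rank B (z' - 1)"
        using y by (intro rank_mono finite_bset) simp
      ultimately show False
        using rank_y by simp
    qed
    then have "even y \<longleftrightarrow> even z'"
      using zeros_around_ones_parity[OF y(1) less.prems(2) y(3) ones] by simp
    moreover have "even z \<longleftrightarrow> even y"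
      by (rule less.IH[OF y(3) less.prems(1) y(1,2) rank_y(1)])
    ultimately show ?thesis
      by simp
  qed simp
qed

lemma zeros_same_rank_parity:
  assumes "z \<in> {1..t} - S" "z' \<in> {1..t} - S" "rank B z = rank B z'"
  shows "even z \<longleftrightarrow> even z'"
proof (cases "z \<le> z'")
  case True
  then show ?thesis
    using zeros_same_rank_parity_le[OF assms(1,2) _ assms(3)] by simp
next
  case False
  then show ?thesis
    using zeros_same_rank_parity_le[OF assms(2,1) _ assms(3)[symmetric]] by simp
qed

lemma b_eq_elem_of_rank: "1 \<le> m \<Longrightarrow> m \<le> e \<Longrightarrow> b m = elem_of_rank B (m - 1)"
proof -
  assume m: "1 \<le> m" "m \<le> e"
  define xs where "xs = sorted_list_of_set B"
  have xs: "set xs = B" "sorted_wrt (<) xs" "length xs = e"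
    unfolding xs_def e_of_def using finite_bset by auto
  have "b m = xs ! (m - 1)"
    unfolding b_of_def xs_def ..
  moreover have "xs ! (m - 1) \<in> B" "rank B (xs ! (m - 1)) = m - 1"
    using rank_sorted_nth[OF xs(2)] m xs by auto
  ultimately show ?thesis
    using elem_of_rank_rank[OF finite_bset] by metis
qed

lemma
  assumes "1 \<le> m" "m \<le> e"
  shows b_in_bset: "b m \<in> B" and rank_b: "rank B (b m) = m - 1"
  using elem_of_rank_in[OF finite_bset] rank_elem_of_rank[OF finite_bset] assms
  by (auto simp: b_eq_elem_of_rank e_of_def)

lemma b_less_iff: "1 \<le> m \<Longrightarrow> m \<le> e \<Longrightarrow> b m < j \<longleftrightarrow> m \<le> rank B j"
  using elem_of_rank_less_iff[OF finite_bset, of "m - 1" j]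
  by (simp add: b_eq_elem_of_rank e_of_def) arith

lemma b_less_b_iff: "1 \<le> m \<Longrightarrow> m \<le> e \<Longrightarrow> 1 \<le> m' \<Longrightarrow> m' \<le> e \<Longrightarrow> b m < b m' \<longleftrightarrow> m < m'"
  by (simp add: b_less_iff rank_b) arith

lemma b_inj: "1 \<le> m \<Longrightarrow> m \<le> e \<Longrightarrow> 1 \<le> m' \<Longrightarrow> m' \<le> e \<Longrightarrow> b m = b m' \<longleftrightarrow> m = m'"
  using b_less_b_iff by (metis less_irrefl linorder_neqE_nat)

lemma rank_le_e: "rank B j \<le> e"
  unfolding e_of_def by (rule rank_le_card[OF finite_bset])

lemma bset_eq_b: "bb \<in> B \<Longrightarrow> b (Suc (rank B bb)) = bb \<and> Suc (rank B bb) \<le> e"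
  using b_eq_elem_of_rank elem_of_rank_rank[OF finite_bset] rank_less_card[OF finite_bset]
  by (simp add: e_of_def Suc_le_eq)

lemma rank_Suc_b: "1 \<le> m \<Longrightarrow> m \<le> e \<Longrightarrow> rank B (Suc (b m)) = m"
  using rank_Suc[OF finite_bset] b_in_bset rank_b by simp

lemma b_rank_less: "rank B j = 0 \<or> b (rank B j) < j"
proof (cases "rank B j = 0")
  case False
  then show ?thesis
    using b_less_iff[of "rank B j" j] rank_le_e[of j] by simp
qed simp

lemma le_b_Suc_rank: "rank B j = e \<or> j \<le> b (Suc (rank B j))"
proof (cases "rank B j = e")
  case False
  then show ?thesis
    using b_less_iff[of "Suc (rank B j)" j] rank_le_e[of j] by simp
qed simp

end

locale thin_vector_e_pos = thin_vector +
  assumes e_pos: "1 \<le> e_of t d"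
begin

lemma zero_rank_parity:
  assumes "z \<in> {1..t} - S"
  shows "even (z + rank B z) \<longleftrightarrow> even (b 1)"
proof -
  have "even (z + n) \<longleftrightarrow> even (b 1)" if "z \<in> {1..t} - S" "rank B z = n" for z n
    using that
  proof (induction n arbitrary: z)
    case 0
    obtain z' where z': "z' \<in> {1..t} - S" "rank B z' = rank B (b 1)" "even z' \<longleftrightarrow> even (b 1)"
      using zero_before_bset[OF b_in_bset] e_pos by (metis order.refl)
    have "rank B z = rank B z'"
      using z'(2) rank_b[of 1] e_pos 0 by simp
    then show ?case
      using zeros_same_rank_parity[OF 0(1) z'(1)] z'(3) by simp
  next
    case (Suc m)
    then have m: "1 \<le> Suc m" "Suc m \<le> e"
      using rank_le_e[of z] by auto
    obtain z' where z': "z' \<in> {1..t} - S" "rank B z' = m" "even z' \<longleftrightarrow> even (b (Suc m))"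
      using zero_before_bset[OF b_in_bset[OF m]] rank_b[OF m] by (metis diff_Suc_1)
    have "even (z' + m) \<longleftrightarrow> even (b 1)"
      using Suc.IH z'(1,2) .
    moreover have "rank B z = rank B (Suc (b (Suc m)))"
      using Suc.prems(2) rank_Suc_b[OF m] by simp
    then have "even z \<longleftrightarrow> even (Suc (b (Suc m)))"
      by (rule zeros_same_rank_parity[OF Suc.prems(1) bset_props(2)[OF b_in_bset[OF m]]])
    then have "even (z + Suc m) \<longleftrightarrow> even (z' + m)"
      using z'(3) by simp
    ultimately show ?case
      by simp
  qed
  then show ?thesis
    using assms by simp
qed

lemma b_parity:
  assumes "1 \<le> m" "m \<le> e"
  shows "even (b m + m) \<longleftrightarrow> odd (b 1)"
proof -
  have "even (Suc (b m) + rank B (Suc (b m))) \<longleftrightarrow> even (b 1)"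
    by (rule zero_rank_parity[OF bset_props(2)[OF b_in_bset[OF assms]]])
  moreover have "even (Suc (b m) + m) \<longleftrightarrow> odd (b m + m)"
    by simp
  ultimately have "odd (b m + m) \<longleftrightarrow> even (b 1)"
    using rank_Suc_b[OF assms] by (simp only:)
  then show ?thesis
    by blast
qed

section \<open>The set J\<close>

lemma b_1_ge_3: "3 \<le> b 1"
  using bset_props(4)[OF b_in_bset] e_pos by simp

lemma first_J_clause_iff:
  "(j \<le> b 1 - 1 \<and> j mod 2 = (b 1 - 1) mod 2) \<longleftrightarrow> rank B j = 0 \<and> (even j \<longleftrightarrow> odd (b 1))"
proof -
  have parity: "j mod 2 = (b 1 - 1) mod 2 \<longleftrightarrow> (even j \<longleftrightarrow> odd (b 1))"
    unfolding mod_2_eq_iff_even using b_1_ge_3 by (simp add: even_diff_nat)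
  have rank: "rank B j = 0 \<longleftrightarrow> j \<le> b 1"
    using b_less_iff[of 1 j] e_pos by auto
  show ?thesis
  proof
    assume clause: "j \<le> b 1 - 1 \<and> j mod 2 = (b 1 - 1) mod 2"
    then have "j \<le> b 1"
      by arith
    then show "rank B j = 0 \<and> (even j \<longleftrightarrow> odd (b 1))"
      using clause parity rank by simp
  next
    assume region: "rank B j = 0 \<and> (even j \<longleftrightarrow> odd (b 1))"
    then have "j \<noteq> b 1"
      by (metis (full_types))
    moreover have "j \<le> b 1"
      using region rank by simp
    ultimately have "j \<le> b 1 - 1"
      by arith
    then show "j \<le> b 1 - 1 \<and> j mod 2 = (b 1 - 1) mod 2"
      using region parity by simp
  qed
qed

lemma middle_J_clause_iff:
  "(\<exists>i. 1 \<le> i \<and> i < e \<and> b i + 2 \<le> j \<and> j \<le> b (Suc i) - 1 \<and> j mod 2 = b i mod 2) \<longleftrightarrow>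
    0 < rank B j \<and> rank B j < e \<and> b (rank B j) + 2 \<le> j \<and> (even (j + rank B j) \<longleftrightarrow> odd (b 1))"
  (is "?clause \<longleftrightarrow> ?region")
proof
  assume ?clause
  then obtain i where i: "1 \<le> i" "i < e" "b i + 2 \<le> j" "j \<le> b (Suc i) - 1"
    and "j mod 2 = b i mod 2"
    by blast
  then have parity: "even j \<longleftrightarrow> even (b i)"
    by (simp only: mod_2_eq_iff_even)
  have "j < b (Suc i)"
    using i(4) bset_props(4)[OF b_in_bset[of "Suc i"]] i(1,2) by arith
  then have "i \<le> rank B j" "\<not> Suc i \<le> rank B j"
    using b_less_iff[of i j] b_less_iff[of "Suc i" j] i by auto
  then have "rank B j = i"
    by simp
  then show ?region
    using i parity b_parity[of i] by simp
next
  assume region: ?region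
  define x where "x = rank B j"
  have x: "1 \<le> x" "x < e" "b x + 2 \<le> j" "even (j + x) \<longleftrightarrow> odd (b 1)"
    using region unfolding x_def by auto
  have "j \<le> b (Suc x)"
    using le_b_Suc_rank[of j] x unfolding x_def by simp
  moreover have "j \<noteq> b (Suc x)"
    using b_parity[of "Suc x"] x by auto
  ultimately have "j \<le> b (Suc x) - 1"
    by simp
  moreover have "even j \<longleftrightarrow> even (b x)"
    using x(1,2,4) b_parity[of x] by (cases "even x") simp_all
  then have "j mod 2 = b x mod 2"
    by (simp only: mod_2_eq_iff_even)
  ultimately show ?clause
    using x(1-3) by blast
qed

lemma last_J_clause_iff:
  "(b e + 2 \<le> j \<and> j mod 2 = b e mod 2) \<longleftrightarrow>
    rank B j = e \<and> b e + 2 \<le> j \<and> (even (j + e) \<longleftrightarrow> odd (b 1))"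
proof -
  have "rank B j = e" if "b e + 2 \<le> j"
    using b_less_iff[of e j] e_pos rank_le_e[of j] that by simp
  moreover have "j mod 2 = b e mod 2 \<longleftrightarrow> (even (j + e) \<longleftrightarrow> odd (b 1))"
    unfolding mod_2_eq_iff_even using b_parity[of e] e_pos by (cases "even e") simp_all
  ultimately show ?thesis
    by blast
qed

text \<open>Here rank B j is the number of indices m with b m < j.\<close>

lemma mem_J_iff:
  "j \<in> J \<longleftrightarrow> j \<in> {1..t} \<and> (rank B j = 0 \<or> b (rank B j) + 2 \<le> j) \<and>
    (even (j + rank B j) \<longleftrightarrow> odd (b 1))"
proof -
  have "j \<in> J \<longleftrightarrow> j \<in> {1..t} \<and>
      ((j \<le> b 1 - 1 \<and> j mod 2 = (b 1 - 1) mod 2)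
    \<or> (\<exists>i. 1 \<le> i \<and> i < e \<and> b i + 2 \<le> j \<and> j \<le> b (Suc i) - 1 \<and> j mod 2 = b i mod 2)
    \<or> (b e + 2 \<le> j \<and> j mod 2 = b e mod 2))"
    unfolding J_of_def by (simp only: mem_Collect_eq)
  also have "\<dots> \<longleftrightarrow> j \<in> {1..t} \<and>
      ((rank B j = 0 \<and> (even j \<longleftrightarrow> odd (b 1)))
     \<or> (0 < rank B j \<and> rank B j < e \<and> b (rank B j) + 2 \<le> j \<and> (even (j + rank B j) \<longleftrightarrow> odd (b 1)))
     \<or> (rank B j = e \<and> b e + 2 \<le> j \<and> (even (j + e) \<longleftrightarrow> odd (b 1))))"
    by (simp only: first_J_clause_iff middle_J_clause_iff last_J_clause_iff)
  also have "\<dots> \<longleftrightarrow> j \<in> {1..t} \<and> (rank B j = 0 \<or> b (rank B j) + 2 \<le> j) \<and>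
    (even (j + rank B j) \<longleftrightarrow> odd (b 1))"
  proof (cases "rank B j = 0")
    case True
    then show ?thesis
      using e_pos by simp
  next
    case False
    then show ?thesis
      using rank_le_e[of j] by (cases "rank B j = e") simp_all
  qed
  finally show ?thesis .
qed

lemma J_subset_supp: "J \<subseteq> S"
proof
  fix j assume "j \<in> J"
  then have j: "j \<in> {1..t}" "even (j + rank B j) \<longleftrightarrow> odd (b 1)"
    by (auto simp: mem_J_iff)
  show "j \<in> S"
  proof (rule ccontr)
    assume "j \<notin> S"
    then have "even (j + rank B j) \<longleftrightarrow> even (b 1)"
      using zero_rank_parity[of j] j(1) by simp
    then show False
      using j(2) by simp
  qed
qed

lemma finite_J: "finite J"
  using J_subset_supp finite_supp by (rule finite_subset)

lemma rank_b_minus_1: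
  assumes "1 \<le> m" "m \<le> e"
  shows "rank B (b m - 1) = m - 1"
proof -
  have "Suc (b m - 1) = b m"
    using bset_props(4)[OF b_in_bset[OF assms]] by simp
  have "b m - 1 \<notin> B"
  proof
    assume "b m - 1 \<in> B"
    then have "Suc (b m - 1) \<notin> S"
      using bset_props(2) by blast
    then show False
      using \<open>Suc (b m - 1) = b m\<close> bset_props(1)[OF b_in_bset[OF assms]] by simp
  qed
  then show ?thesis
    using rank_Suc[OF finite_bset, of "b m - 1"] rank_b[OF assms] \<open>Suc (b m - 1) = b m\<close> by simp
qed

lemma rank_b_plus_2:
  assumes "1 \<le> m" "m \<le> e"
  shows "rank B (b m + 2) = m"
proof -
  have "Suc (b m) \<notin> B"
    using bset_props(1) bset_props(2)[OF b_in_bset[OF assms]] by blast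
  then show ?thesis
    using rank_Suc[OF finite_bset, of "Suc (b m)"] rank_Suc_b[OF assms] by simp
qed

lemma b_notin_J:
  assumes "1 \<le> m" "m \<le> e"
  shows "b m \<notin> J"
proof
  assume "b m \<in> J"
  then have "even (b m + (m - 1)) \<longleftrightarrow> odd (b 1)"
    using rank_b[OF assms] by (simp add: mem_J_iff)
  moreover have "even (b m + m) \<longleftrightarrow> odd (b m + (m - 1))"
    using assms by (cases m) simp_all
  ultimately show False
    using b_parity[OF assms] by simp
qed

lemma b_minus_1_in_J:
  assumes "1 \<le> m" "m \<le> e"
  shows "b m - 1 \<in> J"
proof -
  have gap: "b (m - 1) + 2 \<le> b m - 1" if "m \<noteq> 1"
  proof -
    have m': "1 \<le> m - 1" "m - 1 \<le> e" "m - 1 < m"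
      using assms that by auto
    have "b (m - 1) < b m"
      using b_less_b_iff[OF m'(1,2) assms] m'(3) by simp
    moreover have "Suc (b (m - 1)) \<notin> S"
      using bset_props(2)[OF b_in_bset[OF m'(1,2)]] by simp
    then have "Suc (b (m - 1)) \<noteq> b m" "Suc (b (m - 1)) \<noteq> b m - 1"
      using bset_props(1,3)[OF b_in_bset[OF assms]] by metis+
    ultimately show ?thesis
      by linarith
  qed
  have range: "b m - 1 \<in> {1..t}"
    using bset_props(4,5)[OF b_in_bset[OF assms]] by (simp; arith)
  have lower: "m - 1 = 0 \<or> b (m - 1) + 2 \<le> b m - 1"
    using gap by (cases "m = 1") simp_all
  have "b m - 1 + (m - 1) + 2 = b m + m"
    using assms bset_props(4)[OF b_in_bset[OF assms]] by simp
  then have "even (b m - 1 + (m - 1)) \<longleftrightarrow> even (b m + m)"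
    using even_add[of "b m - 1 + (m - 1)" 2] by simp
  then have parity: "even (b m - 1 + (m - 1)) \<longleftrightarrow> odd (b 1)"
    using b_parity[OF assms] by simp
  show ?thesis
    unfolding mem_J_iff rank_b_minus_1[OF assms] using range lower parity by (intro conjI)
qed

lemma b_plus_2_in_J:
  assumes "1 \<le> m" "m \<le> e"
  shows "b m + 2 \<in> J"
  unfolding mem_J_iff rank_b_plus_2[OF assms]
  using b_parity[OF assms] bset_props(5)[OF b_in_bset[OF assms]] by simp

lemma consec_J_b:
  assumes "1 \<le> m" "m \<le> e"
  shows "(b m - 1, b m + 2) \<in> consec J"
proof -
  have "k \<notin> J" if "b m - 1 < k" "k < b m + 2" for k
  proof -
    have "k = b m \<or> k = Suc (b m)"
      using that by arith
    then show ?thesis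
      using b_notin_J[OF assms] bset_props(2)[OF b_in_bset[OF assms]] J_subset_supp by blast
  qed
  then show ?thesis
    using b_minus_1_in_J[OF assms] b_plus_2_in_J[OF assms] unfolding consec_def by auto
qed

lemma Suc_notin_J:
  assumes "j \<in> J"
  shows "Suc j \<notin> J"
proof
  assume "Suc j \<in> J"
  have "j \<notin> B"
  proof
    assume "j \<in> B"
    then have "b (Suc (rank B j)) = j" "Suc (rank B j) \<le> e"
      using bset_eq_b by auto
    then show False
      using b_notin_J[of "Suc (rank B j)"] assms by simp
  qed
  then have "rank B (Suc j) = rank B j"
    using rank_Suc[OF finite_bset] by simp
  then have "even (Suc j + rank B j) \<longleftrightarrow> odd (b 1)"
    using \<open>Suc j \<in> J\<close> unfolding mem_J_iff by metis
  moreover have "even (j + rank B j) \<longleftrightarrow> odd (b 1)"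
    using assms unfolding mem_J_iff by blast
  ultimately show False
    by (cases "even (rank B j)") simp_all
qed

lemma Suc_notin_supp_diff_J:
  assumes "j \<in> S - J"
  shows "Suc j \<notin> S - J"
proof
  assume Suc_j: "Suc j \<in> S - J"
  have "j \<notin> B"
    using bset_props(2) Suc_j by blast
  then have rank_Suc_j: "rank B (Suc j) = rank B j"
    using rank_Suc[OF finite_bset] by simp
  have "j \<in> {1..t}" "Suc j \<in> {1..t}"
    using assms Suc_j mem_supp_iff by auto
  have lower: "rank B j = 0 \<or> b (rank B j) + 2 \<le> j"
  proof (cases "rank B j = 0")
    case False
    then have "b (rank B j) < j" "Suc (b (rank B j)) \<notin> S"
      using b_rank_less[of j] bset_props(2)[OF b_in_bset[of "rank B j"]] rank_le_e[of j] by auto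
    moreover have "j \<in> S"
      using assms by simp
    ultimately have "b (rank B j) < j" "Suc (b (rank B j)) \<noteq> j"
      by auto
    then show ?thesis
      by linarith
  qed simp
  have "j \<in> J" if "even (j + rank B j) \<longleftrightarrow> odd (b 1)"
    unfolding mem_J_iff using that \<open>j \<in> {1..t}\<close> lower by simp
  then have "\<not> (even (j + rank B j) \<longleftrightarrow> odd (b 1))"
    using assms by blast
  have "rank B j = 0 \<or> b (rank B j) + 2 \<le> Suc j"
    using lower by linarith
  then have "Suc j \<in> J" if "even (Suc j + rank B j) \<longleftrightarrow> odd (b 1)"
    unfolding mem_J_iff rank_Suc_j using that \<open>Suc j \<in> {1..t}\<close> by simp
  then have "\<not> (even (Suc j + rank B j) \<longleftrightarrow> odd (b 1))"
    using Suc_j by blast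
  with \<open>\<not> (even (j + rank B j) \<longleftrightarrow> odd (b 1))\<close> show False
    by (cases "even (rank B j)") simp_all
qed

end

section \<open>The matrix F\<close>

locale thin_vector_F = thin_vector_e_pos +
  fixes tt :: "nat \<Rightarrow> 'a::field"
  assumes tt_nonzero: "\<forall>m\<in>{2..e_of t d}. tt m \<noteq> 0"
begin

abbreviation "K \<equiv> S - J"
abbreviation "F \<equiv> Fmat t d tt"

lemma finite_K: "finite K"
  using finite_supp by simp

lemma A_set_eq:
  "A_set t d = consec K \<union> (consec J - {(b m - 1, b m + 2) | m. 2 \<le> m \<and> m \<le> e})
     \<union> {(b m, b m + 2) | m. 1 \<le> m \<and> m \<le> e}"
  unfolding A_set_def Let_def by simp

lemma A_set_subset: "A_set t d \<subseteq> S \<times> S"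
proof -
  have "consec K \<subseteq> S \<times> S" "consec J \<subseteq> S \<times> S"
    using J_subset_supp by (auto dest: consecD)
  moreover have "{(b m, b m + 2) | m. 1 \<le> m \<and> m \<le> e} \<subseteq> S \<times> S"
    using bset_props(1) b_in_bset b_plus_2_in_J J_subset_supp by blast
  ultimately show ?thesis
    unfolding A_set_eq by blast
qed

lemma finite_A_set: "finite (A_set t d)"
  using A_set_subset finite_supp by (meson finite_SigmaI finite_subset)

definition tt_coeff :: "nat \<Rightarrow> nat \<Rightarrow> 'a" where
  "tt_coeff a p = (\<Sum>m\<in>{2..e}. if a = b m - 1 \<and> p = b m + 2 then tt m else 0)"

lemma tt_coeff_eq_0: "\<not> (\<exists>m\<in>{2..e}. a = b m - 1 \<and> p = b m + 2) \<Longrightarrow> tt_coeff a p = 0"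
  unfolding tt_coeff_def by (intro sum.neutral) auto

lemma tt_coeff_b:
  assumes "m \<in> {2..e}"
  shows "tt_coeff (b m - 1) (b m + 2) = tt m"
proof -
  have "tt_coeff (b m - 1) (b m + 2) = (\<Sum>m'\<in>{2..e}. if m' = m then tt m' else 0)"
    unfolding tt_coeff_def
  proof (intro sum.cong refl)
    fix m'
    assume "m' \<in> {2..e}"
    then have "b m + 2 = b m' + 2 \<longleftrightarrow> m' = m"
      using b_inj[of m m'] assms by auto
    then show "(if b m - 1 = b m' - 1 \<and> b m + 2 = b m' + 2 then tt m' else 0)
        = (if m' = m then tt m' else 0)"
      by auto
  qed
  then show ?thesis
    using assms by simp
qed

lemma Fmat_carrier: "F \<in> carrier_mat (card S) (card S)"
  unfolding Fmat_def nvec_eq_card by simp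

lemma index_fmat:
  assumes "a \<in> S" "p \<in> S" "i \<in> S" "j \<in> S"
  shows "fmat t d i j $$ (rank S a, rank S p) = (if a = i \<and> p = j then 1 else 0)"
proof -
  have "rank S a < card S" "rank S p < card S"
    using assms(1,2) rank_less_card[OF finite_supp] by auto
  moreover have "rank S a = rank S i \<longleftrightarrow> a = i" "rank S p = rank S j \<longleftrightarrow> p = j"
    using assms inj_on_eq_iff[OF inj_on_rank[OF finite_supp]] by auto
  ultimately show ?thesis
    unfolding fmat_def nvec_eq_card idx_eq_rank by simp
qed

lemma Fmat_entry:
  assumes "a \<in> S" "p \<in> S"
  shows "F $$ (rank S a, rank S p) = (if (a, p) \<in> A_set t d then 1 else 0) + tt_coeff a p"
proof -
  note fmat = index_fmat[OF assms]
  have lt: "rank S a < card S" "rank S p < card S"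
    using assms rank_less_card[OF finite_supp] by auto
  have "(\<Sum>q\<in>A_set t d. fmat t d (fst q) (snd q) $$ (rank S a, rank S p))
      = (\<Sum>q\<in>A_set t d. if q = (a, p) then 1 else 0)"
  proof (intro sum.cong refl)
    fix q
    assume "q \<in> A_set t d"
    then have q_in: "fst q \<in> S" "snd q \<in> S"
      using A_set_subset by auto
    show "fmat t d (fst q) (snd q) $$ (rank S a, rank S p) = (if q = (a, p) then 1 else 0)"
      using fmat[OF q_in] by (cases q) auto
  qed
  also have "\<dots> = (if (a, p) \<in> A_set t d then 1 else 0)"
    using finite_A_set by simp
  finally have A_part: "(\<Sum>q\<in>A_set t d. fmat t d (fst q) (snd q) $$ (rank S a, rank S p))
      = (if (a, p) \<in> A_set t d then 1 else 0)" .
  have "(\<Sum>m\<in>{2..e}. tt m * fmat t d (b m - 1) (b m + 2) $$ (rank S a, rank S p)) = tt_coeff a p"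
    unfolding tt_coeff_def
  proof (intro sum.cong refl)
    fix m
    assume "m \<in> {2..e}"
    then have m_in: "b m - 1 \<in> S" "b m + 2 \<in> S"
      using b_minus_1_in_J b_plus_2_in_J J_subset_supp by auto
    show "tt m * fmat t d (b m - 1) (b m + 2) $$ (rank S a, rank S p)
        = (if a = b m - 1 \<and> p = b m + 2 then tt m else 0)"
      unfolding fmat[OF m_in] by simp
  qed
  then show ?thesis
    unfolding Fmat_def nvec_eq_card using lt A_part by simp
qed

lemma Fmat_col_K:
  assumes "a \<in> S" "p \<in> K"
  shows "F $$ (rank S a, rank S p) = (if (a, p) \<in> consec K then 1 else 0)"
proof -
  have p_not_b: "p \<noteq> b m + 2" if "1 \<le> m" "m \<le> e" for m
    using b_plus_2_in_J that assms by auto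
  then have "tt_coeff a p = 0"
    by (intro tt_coeff_eq_0) auto
  moreover have "(a, p) \<notin> consec J" "(a, p) \<notin> {(b m, b m + 2) | m. 1 \<le> m \<and> m \<le> e}"
    using assms consecD p_not_b by blast+
  then have "(a, p) \<in> A_set t d \<longleftrightarrow> (a, p) \<in> consec K"
    unfolding A_set_eq by blast
  ultimately show ?thesis
    using Fmat_entry assms by simp
qed

lemma Fmat_J_not_consec:
  assumes "a \<in> J" "p \<in> J" "(a, p) \<notin> consec J"
  shows "F $$ (rank S a, rank S p) = 0"
proof -
  have "tt_coeff a p = 0"
    using consec_J_b assms(3) by (intro tt_coeff_eq_0) auto
  moreover have "(a, p) \<notin> consec K" "(a, p) \<notin> {(b m, b m + 2) | m. 1 \<le> m \<and> m \<le> e}"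
    using assms(1) consecD b_notin_J by blast+
  then have "(a, p) \<notin> A_set t d"
    unfolding A_set_eq using assms(3) by blast
  moreover have "a \<in> S" "p \<in> S"
    using assms J_subset_supp by auto
  ultimately show ?thesis
    using Fmat_entry by simp
qed

lemma Fmat_consec_J_nonzero:
  assumes "(a, p) \<in> consec J"
  shows "F $$ (rank S a, rank S p) \<noteq> 0"
proof -
  have ap: "a \<in> S" "p \<in> S"
    using consecD[OF assms] J_subset_supp by auto
  show ?thesis
  proof (cases "\<exists>m\<in>{2..e}. a = b m - 1 \<and> p = b m + 2")
    case True
    then obtain m where m: "m \<in> {2..e}" "a = b m - 1" "p = b m + 2"
      by blast
    have "a \<in> J"
      using consecD[OF assms] by simp
    then have "(a, p) \<notin> consec K" "a \<notin> {b m' | m'. 1 \<le> m' \<and> m' \<le> e}"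
      using consecD b_notin_J by auto
    moreover have "(a, p) \<in> {(b m' - 1, b m' + 2) | m'. 2 \<le> m' \<and> m' \<le> e}"
      using m by auto
    ultimately have "(a, p) \<notin> A_set t d"
      unfolding A_set_eq by blast
    then show ?thesis
      using Fmat_entry[OF ap] tt_coeff_b[OF m(1)] tt_nonzero m by simp
  next
    case False
    then have "(a, p) \<notin> {(b m - 1, b m + 2) | m. 2 \<le> m \<and> m \<le> e}"
      by auto
    then have "(a, p) \<in> A_set t d"
      unfolding A_set_eq using assms by blast
    then show ?thesis
      using Fmat_entry[OF ap] tt_coeff_eq_0[OF False] by simp
  qed
qed

lemma Fmat_row_b_1:
  assumes "p \<in> S" "p \<le> b 1 + 2"
  shows "F $$ (rank S (b 1), rank S p) = (if p = b 1 + 2 then 1 else 0)"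
proof -
  have e1: "1 \<le> (1::nat)" "1 \<le> e"
    using e_pos by auto
  have "tt_coeff (b 1) p = 0"
    using b_minus_1_in_J b_notin_J[OF e1] by (intro tt_coeff_eq_0) force
  moreover have "(b 1, p) \<in> A_set t d \<longleftrightarrow> p = b 1 + 2"
  proof
    assume A: "(b 1, p) \<in> A_set t d"
    have "(b 1, p) \<notin> consec K"
    proof
      assume "(b 1, p) \<in> consec K"
      then have "p \<in> K" "b 1 < p"
        using consecD by auto
      moreover have "Suc (b 1) \<notin> S" "b 1 + 2 \<in> J"
        using bset_props(2)[OF b_in_bset[OF e1]] b_plus_2_in_J[OF e1] by auto
      ultimately show False
        using assms(2) by (metis DiffD1 DiffD2 Suc_leI add_2_eq_Suc' le_antisym le_SucE)
    qed
    moreover have "(b 1, p) \<notin> consec J"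
      using consecD b_notin_J[OF e1] by blast
    ultimately obtain m where "1 \<le> m" "m \<le> e" "b 1 = b m" "p = b m + 2"
      using A unfolding A_set_eq by auto
    then show "p = b 1 + 2"
      by simp
  next
    assume "p = b 1 + 2"
    then show "(b 1, p) \<in> A_set t d"
      unfolding A_set_eq using e1 by auto
  qed
  ultimately show ?thesis
    using Fmat_entry[OF bset_props(1)[OF b_in_bset[OF e1]] assms(1)] by simp
qed

lemma Fmat_nonzero_imp_add_2_le:
  assumes "a \<in> S" "p \<in> S" "F $$ (rank S a, rank S p) \<noteq> 0"
  shows "a + 2 \<le> p"
proof (cases "\<exists>m\<in>{2..e}. a = b m - 1 \<and> p = b m + 2")
  case False
  then have "(a, p) \<in> A_set t d"
    using Fmat_entry[OF assms(1,2)] tt_coeff_eq_0 assms(3) by (auto split: if_splits)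
  then consider "(a, p) \<in> consec K" | "(a, p) \<in> consec J" | "\<exists>m. a = b m \<and> p = b m + 2"
    unfolding A_set_eq by blast
  then show ?thesis
  proof cases
    case 1
    then show ?thesis
      using Suc_notin_supp_diff_J consecD by (blast intro: consec_add_2_le)
  next
    case 2
    then show ?thesis
      using Suc_notin_J consecD by (blast intro: consec_add_2_le)
  qed auto
qed auto

lemma Fmat_in_nilp: "F \<in> nilp t d"
  unfolding nilp_def
proof (intro CollectI conjI allI impI)
  show "F \<in> carrier_mat (nvec t d) (nvec t d)"
    using Fmat_carrier nvec_eq_card by simp
  fix i and v :: "'a vec"
  assume "inV t d i v"
  then have v: "v \<in> carrier_vec (card S)" and v0: "\<And>r. r < card S \<Longrightarrow> count_le S i \<le> r \<Longrightarrow> v $ r = 0"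
    unfolding inV_def nvec_eq_card vdim_eq_count_le by auto
  show "inV t d (i - 2) (F *\<^sub>v v)"
    unfolding inV_def nvec_eq_card vdim_eq_count_le
  proof (intro conjI allI impI)
    show "F *\<^sub>v v \<in> carrier_vec (card S)"
      using Fmat_carrier v by simp
    fix r
    assume r: "r < card S" "count_le S (i - 2) \<le> r"
    then obtain a where a: "a \<in> S" "rank S a = r"
      using rank_image[OF finite_supp] by (metis imageE lessThan_iff)
    have "\<not> a \<le> i - 2"
      using rank_less_count_le_iff[OF finite_supp a(1), of "i - 2"] a r by simp
    have "F $$ (r, rank S p) * v $ rank S p = 0" if "p \<in> S" for p
    proof (cases "p \<le> i")
      case True
      then have "F $$ (rank S a, rank S p) = 0"
        using Fmat_nonzero_imp_add_2_le[OF a(1) that] \<open>\<not> a \<le> i - 2\<close> by fastforce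
      then show ?thesis
        using a by simp
    next
      case False
      then show ?thesis
        using v0 rank_less_card[OF finite_supp that] rank_less_count_le_iff[OF finite_supp that, of i]
        by simp
    qed
    then have "F $$ (r, c) * v $ c = 0" if "c < card S" for c
      using that rank_image[OF finite_supp] by (metis imageE lessThan_iff)
    then have "(\<Sum>c<card S. F $$ (r, c) * v $ c) = 0"
      by (intro sum.neutral) simp
    then show "(F *\<^sub>v v) $ r = 0"
      using index_mult_mat_vec_sum[OF Fmat_carrier v r(1)] by simp
  qed
qed

section \<open>The short exact sequence\<close>

definition inclK :: "nat \<Rightarrow> 'a mat" where
  "inclK i = mat (count_le S i) (count_le K i) (\<lambda>(r, c). if r = rank S (elem_of_rank K c) then 1 else 0)"

text \<open>With j_0 < j_1 < ... the elements of J, F maps f_(j_(r+1)) to F(j_r, j_(r+1)) f_(j_r)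
  plus vectors f_k with k in K; the products chain_coeff make projJ commute with beta.\<close>

definition chain_coeff :: "nat \<Rightarrow> 'a" where
  "chain_coeff r = (\<Prod>q<r. F $$ (rank S (elem_of_rank J q), rank S (elem_of_rank J (Suc q))))"

definition projJ :: "nat \<Rightarrow> 'a mat" where
  "projJ i = mat (count_le J i) (count_le S i)
     (\<lambda>(r, c). if c = rank S (elem_of_rank J r) then chain_coeff r else 0)"

lemma inclK_carrier: "inclK i \<in> carrier_mat (count_le S i) (count_le K i)"
  unfolding inclK_def by simp

lemma projJ_carrier: "projJ i \<in> carrier_mat (count_le J i) (count_le S i)"
  unfolding projJ_def by simp

lemma dim_inclK [simp]: "dim_row (inclK i) = count_le S i" "dim_col (inclK i) = count_le K i"
  unfolding inclK_def by simp_all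

lemma dim_projJ [simp]: "dim_row (projJ i) = count_le J i" "dim_col (projJ i) = count_le S i"
  unfolding projJ_def by simp_all

lemma
  assumes "c < count_le K i"
  shows elem_of_rank_K: "elem_of_rank K c \<in> K" "rank K (elem_of_rank K c) = c"
    and rank_elem_of_rank_K_less: "rank S (elem_of_rank K c) < count_le S i"
  using elem_of_rank_in_count_le[OF finite_K assms] rank_elem_of_rank_count_le[OF finite_K assms]
    elem_of_rank_le[OF finite_K assms] rank_less_count_le_iff[OF finite_supp]
  by auto

lemma
  assumes "r < count_le J i"
  shows elem_of_rank_J: "elem_of_rank J r \<in> J" "rank J (elem_of_rank J r) = r"
    and rank_elem_of_rank_J_less: "rank S (elem_of_rank J r) < count_le S i"
  using elem_of_rank_in_count_le[OF finite_J assms] rank_elem_of_rank_count_le[OF finite_J assms]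
    elem_of_rank_le[OF finite_J assms] rank_less_count_le_iff[OF finite_supp] J_subset_supp
  by auto

lemma rank_supp_surj:
  assumes "r < count_le S i"
  obtains a where "a \<in> S" "a \<le> i" "r = rank S a"
  using elem_of_rank_in_count_le[OF finite_supp assms] rank_elem_of_rank_count_le[OF finite_supp assms]
    elem_of_rank_le[OF finite_supp assms] by metis

lemma index_inclK:
  assumes "a \<in> S" "a \<le> i" "c < count_le K i"
  shows "inclK i $$ (rank S a, c) = (if a \<in> K \<and> rank K a = c then 1 else 0)"
proof -
  have "rank S a = rank S (elem_of_rank K c) \<longleftrightarrow> a = elem_of_rank K c"
    using inj_on_rank[OF finite_supp] assms(1) elem_of_rank_K(1)[OF assms(3)] by (auto dest: inj_onD)
  also have "\<dots> \<longleftrightarrow> a \<in> K \<and> rank K a = c"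
    using elem_of_rank_K[OF assms(3)] elem_of_rank_rank[OF finite_K] by auto
  finally show ?thesis
    unfolding inclK_def using assms rank_less_count_le_iff[OF finite_supp] by simp
qed

lemma index_projJ:
  assumes "a \<in> S" "a \<le> i" "r < count_le J i"
  shows "projJ i $$ (r, rank S a) = (if a \<in> J \<and> rank J a = r then chain_coeff r else 0)"
proof -
  have "rank S a = rank S (elem_of_rank J r) \<longleftrightarrow> a = elem_of_rank J r"
    using inj_on_rank[OF finite_supp] assms(1) elem_of_rank_J(1)[OF assms(3)] J_subset_supp
    by (auto dest: inj_onD)
  also have "\<dots> \<longleftrightarrow> a \<in> J \<and> rank J a = r"
    using elem_of_rank_J[OF assms(3)] elem_of_rank_rank[OF finite_J] by auto
  finally show ?thesis
    unfolding projJ_def using assms rank_less_count_le_iff[OF finite_supp] by auto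
qed

lemma index_mult_inclK:
  assumes "A \<in> carrier_mat m (count_le S i)" "r < m" "c < count_le K i"
  shows "(A * inclK i) $$ (r, c) = A $$ (r, rank S (elem_of_rank K c))"
proof -
  have "(A * inclK i) $$ (r, c) = (\<Sum>k<count_le S i. A $$ (r, k) * inclK i $$ (k, c))"
    by (rule index_mult_mat_sum[OF assms(1) inclK_carrier assms(2,3)])
  also have "\<dots> = A $$ (r, rank S (elem_of_rank K c))"
    using assms(3) rank_elem_of_rank_K_less[OF assms(3)]
    by (subst sum_lessThan_single[of _ "rank S (elem_of_rank K c)"]) (auto simp: inclK_def)
  finally show ?thesis .
qed

lemma index_projJ_mult:
  assumes "A \<in> carrier_mat (count_le S i) n" "r < count_le J i" "c < n"
  shows "(projJ i * A) $$ (r, c) = chain_coeff r * A $$ (rank S (elem_of_rank J r), c)"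
proof -
  have "(projJ i * A) $$ (r, c) = (\<Sum>k<count_le S i. projJ i $$ (r, k) * A $$ (k, c))"
    by (rule index_mult_mat_sum[OF projJ_carrier assms])
  also have "\<dots> = chain_coeff r * A $$ (rank S (elem_of_rank J r), c)"
    using assms(2) rank_elem_of_rank_J_less[OF assms(2)]
    by (subst sum_lessThan_single[of _ "rank S (elem_of_rank J r)"]) (auto simp: projJ_def)
  finally show ?thesis .
qed

lemma chain_coeff_Suc:
  "chain_coeff (Suc r) = chain_coeff r * F $$ (rank S (elem_of_rank J r), rank S (elem_of_rank J (Suc r)))"
  unfolding chain_coeff_def by simp

lemma chain_coeff_nonzero:
  assumes "r < card J"
  shows "chain_coeff r \<noteq> 0"
proof -
  have "F $$ (rank S (elem_of_rank J q), rank S (elem_of_rank J (Suc q))) \<noteq> 0" if "q < r" for q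
  proof -
    have "q < card J" "Suc q < card J"
      using that assms by auto
    then have "(elem_of_rank J q, elem_of_rank J (Suc q)) \<in> consec J"
      using elem_of_rank_in[OF finite_J] rank_elem_of_rank[OF finite_J] consec_iff_rank[OF finite_J]
      by simp
    then show ?thesis
      by (rule Fmat_consec_J_nonzero)
  qed
  then show ?thesis
    unfolding chain_coeff_def by (simp add: prod_zero_iff)
qed

lemma inclK_alpha:
  "inclK (Suc i) * incl_mat (count_le K (Suc i)) (count_le K i)
    = incl_mat (count_le S (Suc i)) (count_le S i) * inclK i"
proof (rule eq_matI)
  fix r c
  assume "r < dim_row (incl_mat (count_le S (Suc i)) (count_le S i) * inclK i)"
    "c < dim_col (incl_mat (count_le S (Suc i)) (count_le S i) * inclK i)"
  then have r: "r < count_le S (Suc i)" and c: "c < count_le K i"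
    using inclK_carrier by auto
  obtain a where a: "a \<in> S" "a \<le> Suc i" "r = rank S a"
    using rank_supp_surj[OF r] .
  have c': "c < count_le K (Suc i)"
    using c count_le_mono[OF finite_K, of i "Suc i"] by simp
  have "a \<in> K \<and> rank K a = c \<Longrightarrow> a \<le> i"
    using c rank_less_count_le_iff[OF finite_K] by blast
  then show "(inclK (Suc i) * incl_mat (count_le K (Suc i)) (count_le K i)) $$ (r, c)
      = (incl_mat (count_le S (Suc i)) (count_le S i) * inclK i) $$ (r, c)"
    using index_mult_incl_mat[OF inclK_carrier _ r c] index_incl_mat_mult[OF inclK_carrier r c]
      index_inclK[OF a(1,2) c'] index_inclK[OF a(1) _ c] rank_less_count_le_iff[OF finite_supp a(1)]
      count_le_mono[OF finite_K, of i "Suc i"] a(3)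
    by auto
qed (use inclK_carrier in auto)

lemma inclK_beta:
  "inclK j * shift_mat (count_le K j) (count_le K (j + 2)) = rbeta (Mx t d F) j * inclK (j + 2)"
proof (rule eq_matI)
  fix r c
  assume "r < dim_row (rbeta (Mx t d F) j * inclK (j + 2))"
    "c < dim_col (rbeta (Mx t d F) j * inclK (j + 2))"
  then have r: "r < count_le S j" and c: "c < count_le K (j + 2)"
    using inclK_carrier by (auto simp: Mx_simps)
  obtain a where a: "a \<in> S" "a \<le> j" "r = rank S a"
    using rank_supp_surj[OF r] .
  define p where "p = elem_of_rank K c"
  have p: "p \<in> K" "rank K p = c" "rank S p < count_le S (j + 2)"
    using elem_of_rank_K[OF c] rank_elem_of_rank_K_less[OF c] unfolding p_def by auto
  have "(rbeta (Mx t d F) j * inclK (j + 2)) $$ (r, c) = F $$ (rank S a, rank S p)"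
    using index_mult_inclK[of _ "count_le S j", OF _ r c] p a(3) r unfolding p_def
    by (simp add: Mx_simps)
  also have "\<dots> = (if a \<in> K \<and> c = Suc (rank K a) then 1 else 0)"
    using Fmat_col_K[OF a(1) p(1)] consec_iff_rank[OF finite_K] p by auto
  also have "\<dots> = (inclK j * shift_mat (count_le K j) (count_le K (j + 2))) $$ (r, c)"
    using index_mult_shift_mat[OF inclK_carrier r c] index_inclK[OF a(1,2)] a(2,3)
      rank_less_count_le_iff[OF finite_K, of a j] by auto
  finally show "(inclK j * shift_mat (count_le K j) (count_le K (j + 2))) $$ (r, c)
      = (rbeta (Mx t d F) j * inclK (j + 2)) $$ (r, c)"
    by simp
qed (use inclK_carrier in \<open>auto simp: Mx_simps\<close>)

lemma projJ_alpha:
  "projJ (Suc i) * incl_mat (count_le S (Suc i)) (count_le S i)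
    = incl_mat (count_le J (Suc i)) (count_le J i) * projJ i"
proof (rule eq_matI)
  fix r c
  assume "r < dim_row (incl_mat (count_le J (Suc i)) (count_le J i) * projJ i)"
    "c < dim_col (incl_mat (count_le J (Suc i)) (count_le J i) * projJ i)"
  then have r: "r < count_le J (Suc i)" and c: "c < count_le S i"
    using projJ_carrier by auto
  obtain a where a: "a \<in> S" "a \<le> i" "c = rank S a"
    using rank_supp_surj[OF c] .
  have "a \<in> J \<and> rank J a = r \<Longrightarrow> r < count_le J i"
    using a(2) rank_less_count_le_iff[OF finite_J] by blast
  then show "(projJ (Suc i) * incl_mat (count_le S (Suc i)) (count_le S i)) $$ (r, c)
      = (incl_mat (count_le J (Suc i)) (count_le J i) * projJ i) $$ (r, c)"
    using index_mult_incl_mat[OF projJ_carrier _ r c] index_incl_mat_mult[OF projJ_carrier r c]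
      index_projJ[OF a(1) _ r] index_projJ[OF a(1,2)] count_le_mono[OF finite_supp, of i "Suc i"] a(2,3)
    by auto
qed (use projJ_carrier in auto)

lemma Fmat_row_J_eq_0:
  assumes "a \<in> J" "p \<in> S" "\<not> (p \<in> J \<and> rank J p = Suc (rank J a))"
  shows "F $$ (rank S a, rank S p) = 0"
proof (cases "p \<in> J")
  case True
  then show ?thesis
    using Fmat_J_not_consec[OF assms(1) True] consec_iff_rank[OF finite_J] assms by auto
next
  case False
  have "a \<in> S"
    using assms(1) J_subset_supp by blast
  then show ?thesis
    using Fmat_col_K[OF \<open>a \<in> S\<close>] False assms(1,2) consecD by auto
qed

lemma projJ_beta:
  "projJ j * rbeta (Mx t d F) j = shift_mat (count_le J j) (count_le J (j + 2)) * projJ (j + 2)"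
proof (rule eq_matI)
  fix r c
  assume "r < dim_row (shift_mat (count_le J j) (count_le J (j + 2)) * projJ (j + 2))"
    "c < dim_col (shift_mat (count_le J j) (count_le J (j + 2)) * projJ (j + 2))"
  then have r: "r < count_le J j" and c: "c < count_le S (j + 2)"
    using projJ_carrier by auto
  obtain p where p: "p \<in> S" "p \<le> j + 2" "c = rank S p"
    using rank_supp_surj[OF c] .
  define a where "a = elem_of_rank J r"
  have a: "a \<in> J" "rank J a = r" "rank S a < count_le S j"
    using elem_of_rank_J[OF r] rank_elem_of_rank_J_less[OF r] unfolding a_def by auto
  have "(projJ j * rbeta (Mx t d F) j) $$ (r, c) = chain_coeff r * F $$ (rank S a, rank S p)"
    using index_projJ_mult[of _ j, OF _ r c] a p(3) c unfolding a_def by (simp add: Mx_simps)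
  also have "\<dots> = (if p \<in> J \<and> rank J p = Suc r then chain_coeff (Suc r) else 0)"
  proof (cases "p \<in> J \<and> rank J p = Suc r")
    case True
    then have "p = elem_of_rank J (Suc r)"
      using elem_of_rank_rank[OF finite_J] by metis
    then show ?thesis
      using True chain_coeff_Suc[of r] unfolding a_def by simp
  next
    case False
    then show ?thesis
      using Fmat_row_J_eq_0[OF a(1) p(1)] a(2) by auto
  qed
  also have "\<dots> = (shift_mat (count_le J j) (count_le J (j + 2)) * projJ (j + 2)) $$ (r, c)"
    using index_shift_mat_mult[OF projJ_carrier r c] index_projJ[OF p(1,2)] p(3)
      rank_less_count_le_iff[OF finite_J, of p "j + 2"] p(2) by auto
  finally show "(projJ j * rbeta (Mx t d F) j) $$ (r, c)
      = (shift_mat (count_le J j) (count_le J (j + 2)) * projJ (j + 2)) $$ (r, c)" .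
qed (use projJ_carrier in \<open>auto simp: Mx_simps\<close>)

lemma is_hom_inclK: "is_hom t (Delta K) (Mx t d F) inclK"
  unfolding is_hom_def Delta_simps
  using inclK_carrier inclK_alpha inclK_beta by (simp add: Mx_simps)

lemma is_hom_projJ: "is_hom t (Mx t d F) (Delta J) projJ"
  unfolding is_hom_def Delta_simps
  using projJ_carrier projJ_alpha projJ_beta by (simp add: Mx_simps)

lemma index_inclK_mult_vec:
  assumes "u \<in> carrier_vec (count_le K i)" "a \<in> S" "a \<le> i"
  shows "(inclK i *\<^sub>v u) $ rank S a = (if a \<in> K then u $ rank K a else 0)"
proof -
  have "(inclK i *\<^sub>v u) $ rank S a = (\<Sum>c<count_le K i. inclK i $$ (rank S a, c) * u $ c)"
    using rank_less_count_le_iff[OF finite_supp] assms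
    by (intro index_mult_mat_vec_sum[OF inclK_carrier assms(1)]) simp
  also have "\<dots> = (if a \<in> K then u $ rank K a else 0)"
    using index_inclK[OF assms(2,3)] rank_less_count_le_iff[OF finite_K, of a i] assms(3)
    by (subst sum_lessThan_single[of _ "rank K a"]) auto
  finally show ?thesis .
qed

lemma index_projJ_mult_vec:
  assumes "v \<in> carrier_vec (count_le S i)" "r < count_le J i"
  shows "(projJ i *\<^sub>v v) $ r = chain_coeff r * v $ rank S (elem_of_rank J r)"
proof -
  have "(projJ i *\<^sub>v v) $ r = (\<Sum>k<count_le S i. projJ i $$ (r, k) * v $ k)"
    by (rule index_mult_mat_vec_sum[OF projJ_carrier assms])
  also have "\<dots> = chain_coeff r * v $ rank S (elem_of_rank J r)"
    using assms(2) rank_elem_of_rank_J_less[OF assms(2)]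
    by (subst sum_lessThan_single[of _ "rank S (elem_of_rank J r)"]) (auto simp: projJ_def)
  finally show ?thesis .
qed

lemma inclK_injective:
  assumes "u \<in> carrier_vec (count_le K i)" "inclK i *\<^sub>v u = 0\<^sub>v (count_le S i)"
  shows "u = 0\<^sub>v (count_le K i)"
proof (rule eq_vecI)
  fix c
  assume "c < dim_vec (0\<^sub>v (count_le K i) :: 'a vec)"
  then have c: "c < count_le K i"
    by simp
  define a where "a = elem_of_rank K c"
  have a: "a \<in> K" "rank K a = c" "a \<le> i"
    using elem_of_rank_K[OF c] elem_of_rank_le[OF finite_K c] unfolding a_def by auto
  then have "u $ c = (inclK i *\<^sub>v u) $ rank S a"
    using index_inclK_mult_vec[OF assms(1)] by simp
  also have "\<dots> = 0"
    using assms(2) a rank_less_count_le_iff[OF finite_supp] by simp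
  finally show "u $ c = 0\<^sub>v (count_le K i) $ c"
    using c by simp
qed (use assms in simp)

lemma projJ_surjective:
  assumes "w \<in> carrier_vec (count_le J i)"
  shows "\<exists>v\<in>carrier_vec (count_le S i). projJ i *\<^sub>v v = w"
proof
  define v where "v = vec (count_le S i) (\<lambda>k. let a = elem_of_rank S k in
    if a \<in> J then w $ rank J a / chain_coeff (rank J a) else 0)"
  show "v \<in> carrier_vec (count_le S i)"
    unfolding v_def by simp
  show "projJ i *\<^sub>v v = w"
  proof (rule eq_vecI)
    fix r
    assume "r < dim_vec w"
    then have r: "r < count_le J i"
      using assms by simp
    define a where "a = elem_of_rank J r"
    have a: "a \<in> J" "rank J a = r" "rank S a < count_le S i" "a \<in> S"
      using elem_of_rank_J[OF r] rank_elem_of_rank_J_less[OF r] J_subset_supp unfolding a_def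
      by auto
    have "chain_coeff r \<noteq> 0"
      using chain_coeff_nonzero r count_le_le_card[OF finite_J, of i] by simp
    then show "(projJ i *\<^sub>v v) $ r = w $ r"
      using index_projJ_mult_vec[OF _ r, of v] a elem_of_rank_rank[OF finite_supp a(4)]
      unfolding v_def a_def[symmetric] by simp
  qed (use assms in simp)
qed

lemma projJ_mult_inclK_vec:
  assumes "u \<in> carrier_vec (count_le K i)"
  shows "projJ i *\<^sub>v (inclK i *\<^sub>v u) = 0\<^sub>v (count_le J i)"
proof (rule eq_vecI)
  fix r
  assume "r < dim_vec (0\<^sub>v (count_le J i) :: 'a vec)"
  then have r: "r < count_le J i"
    by simp
  have a: "elem_of_rank J r \<in> S" "elem_of_rank J r \<le> i" "elem_of_rank J r \<notin> K"
    using elem_of_rank_J(1)[OF r] J_subset_supp elem_of_rank_le[OF finite_J r] by auto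
  have "inclK i *\<^sub>v u \<in> carrier_vec (count_le S i)"
    by (rule mult_mat_vec_carrier[OF inclK_carrier assms])
  then have "(projJ i *\<^sub>v (inclK i *\<^sub>v u)) $ r
      = chain_coeff r * (inclK i *\<^sub>v u) $ rank S (elem_of_rank J r)"
    by (rule index_projJ_mult_vec[OF _ r])
  also have "\<dots> = 0"
    unfolding index_inclK_mult_vec[OF assms a(1,2)] using a(1,3) by simp
  finally show "(projJ i *\<^sub>v (inclK i *\<^sub>v u)) $ r = 0\<^sub>v (count_le J i) $ r"
    using r by simp
qed simp

lemma ker_projJ_subset_range_inclK:
  assumes v: "v \<in> carrier_vec (count_le S i)" and ker: "projJ i *\<^sub>v v = 0\<^sub>v (count_le J i)"
  shows "v = inclK i *\<^sub>v vec (count_le K i) (\<lambda>c. v $ rank S (elem_of_rank K c))"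
    (is "v = inclK i *\<^sub>v ?u")
proof (rule eq_vecI)
  fix k
  assume "k < dim_vec (inclK i *\<^sub>v ?u)"
  then obtain a where a: "a \<in> S" "a \<le> i" "k = rank S a"
    using rank_supp_surj by auto
  show "v $ k = (inclK i *\<^sub>v ?u) $ k"
  proof (cases "a \<in> K")
    case True
    then have "rank K a < count_le K i" "elem_of_rank K (rank K a) = a"
      using rank_less_count_le_iff[OF finite_K] elem_of_rank_rank[OF finite_K] a(2) by auto
    then show ?thesis
      using index_inclK_mult_vec[OF vec_carrier a(1,2)] True a(3) by simp
  next
    case False
    then have aJ: "a \<in> J" "rank J a < count_le J i" "elem_of_rank J (rank J a) = a"
      using a rank_less_count_le_iff[OF finite_J] elem_of_rank_rank[OF finite_J] by auto
    then have "chain_coeff (rank J a) * v $ rank S a = 0"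
      using index_projJ_mult_vec[OF v aJ(2)] ker by simp
    moreover have "chain_coeff (rank J a) \<noteq> 0"
      using chain_coeff_nonzero aJ(2) count_le_le_card[OF finite_J, of i] by simp
    ultimately have "v $ k = 0"
      using a(3) by simp
    moreover have "(inclK i *\<^sub>v ?u) $ k = 0"
      unfolding a(3) index_inclK_mult_vec[OF vec_carrier a(1,2)] using False a(1) by simp
    ultimately show ?thesis
      by simp
  qed
qed (use v in simp)

lemma short_exact_inclK_projJ: "short_exact t (Delta K) (Mx t d F) (Delta J) inclK projJ"
  unfolding short_exact_def Delta_simps Mx_simps
  using is_hom_inclK is_hom_projJ inclK_injective projJ_surjective projJ_mult_inclK_vec
    ker_projJ_subset_range_inclK by (metis vec_carrier)

lemma index_beta_b_1_mult:
  assumes "A \<in> carrier_mat (count_le S (b 1 + 2)) n" "c < n"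
  shows "(rbeta (Mx t d F) (b 1) * A) $$ (rank S (b 1), c) = A $$ (rank S (b 1 + 2), c)"
proof -
  have e1: "1 \<le> (1::nat)" "1 \<le> e"
    using e_pos by auto
  have b1: "b 1 \<in> S" "b 1 + 2 \<in> S"
    using bset_props(1) b_in_bset[OF e1] b_plus_2_in_J[OF e1] J_subset_supp by auto
  have lt: "rank S (b 1) < count_le S (b 1)" "rank S (b 1 + 2) < count_le S (b 1 + 2)"
    using b1 rank_less_count_le_iff[OF finite_supp] by auto
  have "(rbeta (Mx t d F) (b 1) * A) $$ (rank S (b 1), c)
      = (\<Sum>k<count_le S (b 1 + 2). F $$ (rank S (b 1), k) * A $$ (k, c))"
    using index_mult_mat_sum[OF _ assms(1) lt(1) assms(2), of "rbeta (Mx t d F) (b 1)"] lt(1)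
    by (simp add: Mx_simps)
  also have "\<dots> = A $$ (rank S (b 1 + 2), c)"
  proof (subst sum_lessThan_single[of _ "rank S (b 1 + 2)"])
    fix k
    assume k: "k < count_le S (b 1 + 2)" "k \<noteq> rank S (b 1 + 2)"
    then obtain p where "p \<in> S" "p \<le> b 1 + 2" "k = rank S p" "p \<noteq> b 1 + 2"
      using rank_supp_surj by metis
    then show "F $$ (rank S (b 1), k) * A $$ (k, c) = 0"
      using Fmat_row_b_1 by simp
  qed (use lt Fmat_row_b_1 b1 in simp)
  finally show ?thesis .
qed

text \<open>The obstruction to splitting: beta_(b 1) of Delta(J) maps the generator born at b 1 + 2 to
  the one born at b 1 - 1, which any morphism sends into V_(b 1 - 1), while row b 1 of
  beta_(b 1) of M(F) only sees the coordinate of f_(b 1 + 2).\<close>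

lemma hom_from_Delta_J_vanishes:
  assumes hom: "is_hom t (Delta J) (Mx t d F) s"
  shows "s (b 1 + 2) $$ (rank S (b 1 + 2), rank J (b 1 + 2)) = 0"
proof -
  have e1: "1 \<le> (1::nat)" "1 \<le> e"
    using e_pos by auto
  define bb where "bb = b 1"
  have bb: "3 \<le> bb" "bb + 2 \<le> t" "bb \<in> S" "bb - 1 \<in> J" "bb + 2 \<in> J"
    using bset_props(1,4,5)[OF b_in_bset[OF e1]] b_minus_1_in_J[OF e1] b_plus_2_in_J[OF e1]
    unfolding bb_def by auto
  define h where "h = rank J (bb + 2)"
  have h: "h = Suc (rank J (bb - 1))"
    using consec_J_b[OF e1] consec_iff_rank[OF finite_J] unfolding h_def bb_def by simp
  have h_less: "h < count_le J (bb + 2)" "h - 1 < count_le J (bb - 1)"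
    using rank_less_count_le_iff[OF finite_J bb(5), of "bb + 2"]
      rank_less_count_le_iff[OF finite_J bb(4), of "bb - 1"] h
    unfolding h_def by simp_all
  have s: "s bb \<in> carrier_mat (count_le S bb) (count_le J bb)"
      "s (bb + 2) \<in> carrier_mat (count_le S (bb + 2)) (count_le J (bb + 2))"
    using hom bb(1,2) unfolding is_hom_def Delta_simps Mx_simps by auto
  have "Suc (bb - 1) = bb" "\<not> bb \<le> bb - 1"
    using bb(1) by simp_all
  then have rank_bb: "count_le S (bb - 1) \<le> rank S bb" "rank S bb < count_le S (Suc (bb - 1))"
    using rank_less_count_le_iff[OF finite_supp bb(3)] by (simp_all add: not_less[symmetric])
  then have vanish: "s bb $$ (rank S bb, h - 1) = 0"
    using hom_from_Delta_vanishes[OF hom _ _ rank_bb h_less(2)] bb(1,2) \<open>Suc (bb - 1) = bb\<close> by simp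
  have beta: "s bb * shift_mat (count_le J bb) (count_le J (bb + 2)) = rbeta (Mx t d F) bb * s (bb + 2)"
    using hom bb(1,2) unfolding is_hom_def Delta_simps by simp
  have beta_row: "(rbeta (Mx t d F) bb * s (bb + 2)) $$ (rank S bb, h)
      = s (bb + 2) $$ (rank S (bb + 2), h)"
    using index_beta_b_1_mult s(2) h_less(1) unfolding bb_def by blast
  have "h - 1 < count_le J bb" "rank S bb < count_le S bb"
    using h_less(2) count_le_mono[OF finite_J, of "bb - 1" bb] rank_bb(2) \<open>Suc (bb - 1) = bb\<close>
    by simp_all
  then have "s (bb + 2) $$ (rank S (bb + 2), h) = s bb $$ (rank S bb, h - 1)"
    using index_mult_shift_mat[OF s(1) _ h_less(1)] beta beta_row h by simp
  then show ?thesis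
    using vanish unfolding h_def bb_def by simp
qed

lemma projJ_not_split: "\<not> splits t (Mx t d F) (Delta J) projJ"
proof
  assume "splits t (Mx t d F) (Delta J) projJ"
  then obtain s where hom: "is_hom t (Delta J) (Mx t d F) s"
    and is_section: "\<And>i. i \<in> {1..t} \<Longrightarrow> projJ i * s i = 1\<^sub>m (count_le J i)"
    unfolding splits_def Delta_simps by blast
  have e1: "1 \<le> (1::nat)" "1 \<le> e"
    using e_pos by auto
  define j where "j = b 1 + 2"
  have j: "j \<in> J" "j \<in> {1..t}"
    using b_plus_2_in_J[OF e1] bset_props(5)[OF b_in_bset[OF e1]] unfolding j_def by auto
  define h where "h = rank J j"
  have h: "h < count_le J j" "elem_of_rank J h = j"
    using rank_less_count_le_iff[OF finite_J j(1)] elem_of_rank_rank[OF finite_J j(1)]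
    unfolding h_def by auto
  have s: "s j \<in> carrier_mat (count_le S j) (count_le J j)"
    using hom j(2) unfolding is_hom_def Delta_simps Mx_simps by auto
  have "(projJ j * s j) $$ (h, h) = 0"
    using index_projJ_mult[OF s h(1) h(1)] h(2) hom_from_Delta_J_vanishes[OF hom]
    unfolding h_def j_def by simp
  moreover have "(projJ j * s j) $$ (h, h) = 1"
    using is_section[OF j(2)] h(1) by simp
  ultimately show False
    by simp
qed

end

theorem lemma7p3:
  fixes t :: nat and d :: "nat \<Rightarrow> nat" and tt :: "nat \<Rightarrow> 'a::field"
  assumes "alg_closed TYPE('a)"
    and "thin t d"
    and "e_of t d \<ge> 2"
    and "\<forall>m\<in>{2..e_of t d}. tt m \<noteq> 0"
  shows "Fmat t d tt \<in> nilp t d \<and>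
    (\<exists>f g. short_exact t (Delta (supp t d - J_of t d)) (Mx t d (Fmat t d tt)) (Delta (J_of t d)) f g
           \<and> \<not> splits t (Mx t d (Fmat t d tt)) (Delta (J_of t d)) g)"
proof -
  interpret thin_vector_F t d tt
    using assms(2-4) by unfold_locales simp_all
  show ?thesis
    using Fmat_in_nilp short_exact_inclK_projJ projJ_not_split by blast
qed

end
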